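(* Let $K>0$ and $R>K^2$. Let $\Gamma$ be a state on $\mathfrak{F}(\mathfrak{H})$ supported in the sector $\{\mathcal{N}\le K^2\tau\}$ (i.e. $\Gamma=\mathbf{1}(\mathcal{N}\le K^2\tau)\Gamma\mathbf{1}(\mathcal{N}\le K^2\tau)$). Let $P$ be a $J$-dimensional orthogonal projection on $\mathfrak{H}$ with $J\le\tau^{1/8}$, and let $\mu^{\tau^{-1}}_{P,\Gamma}$ be the lower symbol of $\Gamma$ on $P\mathfrak{H}$ at scale $\tau^{-1}$. Then there are constants $C(K,R),c(K,R)>0$ depending only on $K$ and $R$ such that $$\int_{\{\|Pu\|_{L^2}^2>R\}}\|Pu\|_{L^2}^6\,d\mu^{\tau^{-1}}_{P,\Gamma}(u)\le C(K,R)e^{-c(K,R)\tau}.$$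
   Context: $\mathfrak{H}$ is a separable Hilbert space (here $L^2(\mathbb{T};\mathbb{C})$), $\mathfrak{F}(\mathfrak{H})$ its bosonic Fock space with number operator $\mathcal{N}$; a state is a nonnegative trace-class operator of trace one. For an orthogonal projection $P$ with $Q=1-P$, let $\mathcal{U}:\mathfrak{F}(\mathfrak{H})\to\mathfrak{F}(P\mathfrak{H})\otimes\mathfrak{F}(Q\mathfrak{H})$ be the canonical unitary with $\mathcal{U}a^\dagger(f)\mathcal{U}^*=a^\dagger(Pf)\otimes1+1\otimes a^\dagger(Qf)$ (mapping vacuum to vacuum). The localization $\Gamma_P$ of $\Gamma$ is the state on $\mathfrak{F}(P\mathfrak{H})$ with $\mathrm{Tr}(A\Gamma_P)=\mathrm{Tr}((A\otimes1)\mathcal{U}\Gamma\mathcal{U}^* )$ for all bounded $A$. For $v\in P\mathfrak{H}$ the coherent state is $\xi(v)=e^{-\|v\|^2/2}\bigoplus_{n\ge0}(n!)^{-1/2}v^{\otimes n}\in\mathfrak{F}(P\mathfrak{H})$. The lower symbol at scale $\varsigma>0$ is the measure on $P\mathfrak{H}\simeq\mathbb{C}^J$ given by $d\mu^\varsigma_{P,\Gamma}(u)=(\varsigma\pi)^{-J}\langle\xi(u/\sqrt\varsigma),\Gamma_P\,\xi(u/\sqrt\varsigma)\rangle\,du$, with $du$ Lebesgue measure. *)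

theory Defs
  imports "HOL-Analysis.Analysis"
begin

text \<open>One-particle space: L2(T;C) represented through its Fourier coefficients,
  i.e. as l2(Z) (Parseval unitary). Vectors are functions int => complex.\<close>

definition l2 :: "(int \<Rightarrow> complex) \<Rightarrow> bool" where
  "l2 f \<longleftrightarrow> (\<lambda>x. (cmod (f x))^2) summable_on UNIV"

definition l2_inner :: "(int \<Rightarrow> complex) \<Rightarrow> (int \<Rightarrow> complex) \<Rightarrow> complex" where
  "l2_inner f g = (\<Sum>\<^sub>\<infinity>x. cnj (f x) * g x)"

definition l2_normsq :: "(int \<Rightarrow> complex) \<Rightarrow> real" where
  "l2_normsq f = (\<Sum>\<^sub>\<infinity>x. (cmod (f x))^2)"

text \<open>A J-dimensional orthogonal projection P is given by an orthonormal basis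
  e 0, ..., e (J-1) of its range: P f = sum_j <e j, f> e j.  The identification
  P H = C^J is via this basis.\<close>

definition orthonormal_fam :: "nat \<Rightarrow> (nat \<Rightarrow> int \<Rightarrow> complex) \<Rightarrow> bool" where
  "orthonormal_fam J e \<longleftrightarrow> (\<forall>j<J. l2 (e j)) \<and>
     (\<forall>i<J. \<forall>j<J. l2_inner (e i) (e j) = (if i = j then 1 else 0))"

definition proj :: "nat \<Rightarrow> (nat \<Rightarrow> int \<Rightarrow> complex) \<Rightarrow> (int \<Rightarrow> complex) \<Rightarrow> (int \<Rightarrow> complex)" where
  "proj J e f = (\<lambda>x. \<Sum>j<J. l2_inner (e j) f * e j x)"

definition vec_of :: "nat \<Rightarrow> (nat \<Rightarrow> int \<Rightarrow> complex) \<Rightarrow> (nat \<Rightarrow> complex) \<Rightarrow> (int \<Rightarrow> complex)" where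
  "vec_of J e w = (\<lambda>x. \<Sum>j<J. w j * e j x)"

text \<open>Bosonic Fock space: a vector is a family of symmetric n-particle wave functions,
  encoded as one function on lists of arbitrary length (the n-th component is the
  restriction to lists of length n), with finite total l2 norm.\<close>

definition fock_vec :: "(int list \<Rightarrow> complex) \<Rightarrow> bool" where
  "fock_vec \<psi> \<longleftrightarrow> (\<forall>xs ys. mset xs = mset ys \<longrightarrow> \<psi> xs = \<psi> ys) \<and>
     (\<lambda>xs. (cmod (\<psi> xs))^2) summable_on UNIV"

definition fock_inner :: "(int list \<Rightarrow> complex) \<Rightarrow> (int list \<Rightarrow> complex) \<Rightarrow> complex" where
  "fock_inner \<psi> \<phi> = (\<Sum>\<^sub>\<infinity>xs. cnj (\<psi> xs) * \<phi> xs)"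

definition fock_normsq :: "(int list \<Rightarrow> complex) \<Rightarrow> real" where
  "fock_normsq \<psi> = (\<Sum>\<^sub>\<infinity>xs. (cmod (\<psi> xs))^2)"

text \<open>States (nonnegative trace class, trace one) are given through a decomposition
  Gamma = sum_i lam i |psi i><psi i| with lam i >= 0, sum lam = 1, psi i unit vectors;
  every state has such a decomposition (spectral theorem), and every such sum is a state.\<close>

definition state_decomp :: "(nat \<Rightarrow> real) \<Rightarrow> (nat \<Rightarrow> int list \<Rightarrow> complex) \<Rightarrow> bool" where
  "state_decomp lam psi \<longleftrightarrow> (\<forall>i. 0 \<le> lam i) \<and> lam sums 1 \<and>
     (\<forall>i. fock_vec (psi i) \<and> fock_normsq (psi i) = 1)"

definition state_op :: "(nat \<Rightarrow> real) \<Rightarrow> (nat \<Rightarrow> int list \<Rightarrow> complex) \<Rightarrow>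
     (int list \<Rightarrow> complex) \<Rightarrow> (int list \<Rightarrow> complex)" where
  "state_op lam psi \<phi> = (\<lambda>xs. \<Sum>i. complex_of_real (lam i) * fock_inner (psi i) \<phi> * psi i xs)"

definition sector_cut :: "real \<Rightarrow> (int list \<Rightarrow> complex) \<Rightarrow> (int list \<Rightarrow> complex)" where
  "sector_cut M \<phi> = (\<lambda>xs. if real (length xs) \<le> M then \<phi> xs else 0)"

definition in_sector :: "real \<Rightarrow> (nat \<Rightarrow> real) \<Rightarrow> (nat \<Rightarrow> int list \<Rightarrow> complex) \<Rightarrow> bool" where
  "in_sector M lam psi \<longleftrightarrow>
     (\<forall>\<phi>. fock_vec \<phi> \<longrightarrow> state_op lam psi \<phi> = sector_cut M (state_op lam psi (sector_cut M \<phi>)))"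

definition P_at :: "nat \<Rightarrow> (nat \<Rightarrow> int \<Rightarrow> complex) \<Rightarrow> nat \<Rightarrow> (int list \<Rightarrow> complex) \<Rightarrow> (int list \<Rightarrow> complex)" where
  "P_at J e i g = (\<lambda>zs. \<Sum>j<J. e j (zs ! i) * (\<Sum>\<^sub>\<infinity>y. cnj (e j y) * g (zs[i := y])))"

definition Q_at :: "nat \<Rightarrow> (nat \<Rightarrow> int \<Rightarrow> complex) \<Rightarrow> nat \<Rightarrow> (int list \<Rightarrow> complex) \<Rightarrow> (int list \<Rightarrow> complex)" where
  "Q_at J e i g = (\<lambda>zs. g zs - P_at J e i g zs)"

definition Q_coords :: "nat \<Rightarrow> (nat \<Rightarrow> int \<Rightarrow> complex) \<Rightarrow> nat list \<Rightarrow> (int list \<Rightarrow> complex) \<Rightarrow> (int list \<Rightarrow> complex)" where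
  "Q_coords J e is g = fold (Q_at J e) is g"

text \<open>The partial inner product (<xi(v)| (x) 1) U psi, an element of F(Q H) embedded in F(H),
  where v = vec_of J e w and U is the canonical unitary. Explicitly, the component of U psi in
  F_k(PH) (x) F_m(QH) is sqrt(binom(k+m,k)) (P^{(x)k} (x) Q^{(x)m}) psi_{k+m}, and the k-th
  component of xi(v) is exp(-|v|^2/2) (k!)^(-1/2) v^{(x)k}.\<close>
definition coh_contract :: "nat \<Rightarrow> (nat \<Rightarrow> int \<Rightarrow> complex) \<Rightarrow> (nat \<Rightarrow> complex) \<Rightarrow>
     (int list \<Rightarrow> complex) \<Rightarrow> (int list \<Rightarrow> complex)" where
  "coh_contract J e w \<psi> = (\<lambda>xs.
     \<Sum>k. complex_of_real (exp (- l2_normsq (vec_of J e w) / 2) / sqrt (fact k)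
            * sqrt (real ((k + length xs) choose k)))
          * (\<Sum>\<^sub>\<infinity>ys\<in>{ys. length ys = k}.
               prod_list (map (\<lambda>y. cnj (vec_of J e w y)) ys)
               * Q_coords J e [k..<k + length xs] \<psi> (ys @ xs)))"

text \<open><xi(v), Gamma_P xi(v)> = Tr((|xi(v)><xi(v)| (x) 1) U Gamma U^*)
  = sum_i lam i || (<xi(v)| (x) 1) U psi i ||^2.\<close>
definition loc_coherent :: "(nat \<Rightarrow> real) \<Rightarrow> (nat \<Rightarrow> int list \<Rightarrow> complex) \<Rightarrow> nat \<Rightarrow>
     (nat \<Rightarrow> int \<Rightarrow> complex) \<Rightarrow> (nat \<Rightarrow> complex) \<Rightarrow> real" where
  "loc_coherent lam psi J e w = (\<Sum>i. lam i * fock_normsq (coh_contract J e w (psi i)))"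

definition lower_symbol :: "(nat \<Rightarrow> real) \<Rightarrow> (nat \<Rightarrow> int list \<Rightarrow> complex) \<Rightarrow> nat \<Rightarrow>
     (nat \<Rightarrow> int \<Rightarrow> complex) \<Rightarrow> real \<Rightarrow> (nat \<Rightarrow> complex) measure" where
  "lower_symbol lam psi J e s = density (PiM {..<J} (\<lambda>_. (lborel :: complex measure)))
     (\<lambda>u. ennreal (inverse ((s * pi) ^ J)
        * loc_coherent lam psi J e (\<lambda>j. u j / complex_of_real (sqrt s))))"

end

(*
  The density of the lower symbol at u is an average over the pure states psi of the squared norm
  of the contraction of psi with the coherent state of v = sqrt tau u.  Its k-particle term pairs
  v^(x)k with the component P^(x)k (x) Q^(x)(n-k) psi, which the symmetry of psi makes small:
  the 2^n products of P's and Q's at the n particles split psi orthogonally, and binomial(n, k) of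
  them have the same norm.  With Cauchy-Schwarz and at most K0 = K^2 tau particles this bounds the
  density by (K0 + 1) times the Poisson lower tail exp (-N) sum_{k <= K0} N^k / k! at N = tau |u|^2.
  Exponential tilting with K^2 / R turns this into a Gaussian in u, whose tail moment beyond
  |u|^2 > R decays like exp (-tau I) with I = R - K^2 - K^2 ln (R / K^2) the Poisson rate
  function; the polynomial prefactors and the volume factor exponential in J <= tau^(1/8) are
  absorbed into a quarter of the rate.
*)

theory Submission
  imports Defs "HOL-Probability.Distributions"
begin

section \<open>Square-summable families and the Cauchy--Schwarz inequality\<close>

lemma has_sum_diff:
  fixes f g :: "'a \<Rightarrow> 'b::topological_ab_group_add"
  assumes "(f has_sum a) A" "(g has_sum b) A"
  shows "((\<lambda>x. f x - g x) has_sum (a - b)) A"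
proof -
  have "((\<lambda>x. - g x) has_sum (- b)) A" using assms(2) by (simp add: has_sum_uminus)
  from has_sum_add[OF assms(1) this] show ?thesis by simp
qed

lemma has_sum_sum:
  fixes f :: "'i \<Rightarrow> 'a \<Rightarrow> 'b::topological_comm_monoid_add"
  assumes "finite I" "\<And>i. i \<in> I \<Longrightarrow> (f i has_sum s i) A"
  shows "((\<lambda>x. \<Sum>i\<in>I. f i x) has_sum (\<Sum>i\<in>I. s i)) A"
  using assms
proof (induction I rule: finite_induct)
  case empty
  then show ?case by simp
next
  case (insert i I)
  then show ?case by (simp add: has_sum_add)
qed

lemma sq_summable_mult_norm:
  fixes f g :: "'a \<Rightarrow> complex"
  assumes "(\<lambda>x. (cmod (f x))^2) summable_on A" "(\<lambda>x. (cmod (g x))^2) summable_on A"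
  shows "(\<lambda>x. norm (f x * g x)) summable_on A"
proof -
  have s: "(\<lambda>x. ((cmod (f x))^2 + (cmod (g x))^2) / 2) summable_on A"
    using summable_on_cmult_left[OF summable_on_add[OF assms], where c="1/2"] by (simp add: field_simps)
  show ?thesis
  proof (rule summable_on_comparison_test[OF s])
    fix x
    have "0 \<le> (cmod (f x) - cmod (g x))^2" by simp
    then show "norm (f x * g x) \<le> ((cmod (f x))^2 + (cmod (g x))^2) / 2"
      by (simp add: norm_mult power2_eq_square algebra_simps)
  qed simp
qed

lemma sq_summable_mult:
  fixes f g :: "'a \<Rightarrow> complex"
  assumes "(\<lambda>x. (cmod (f x))^2) summable_on A" "(\<lambda>x. (cmod (g x))^2) summable_on A"
  shows "(\<lambda>x. f x * g x) summable_on A"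
  using abs_summable_summable[OF sq_summable_mult_norm[OF assms]] .

lemma sq_summable_add:
  fixes f g :: "'a \<Rightarrow> complex"
  assumes "(\<lambda>x. (cmod (f x))^2) summable_on A" "(\<lambda>x. (cmod (g x))^2) summable_on A"
  shows "(\<lambda>x. (cmod (f x + g x))^2) summable_on A"
proof -
  have s: "(\<lambda>x. 2 * (cmod (f x))^2 + 2 * (cmod (g x))^2) summable_on A"
    using summable_on_add[OF summable_on_cmult_right[OF assms(1)] summable_on_cmult_right[OF assms(2)]] .
  show ?thesis
  proof (rule summable_on_comparison_test[OF s])
    fix x
    have "cmod (f x + g x) \<le> cmod (f x) + cmod (g x)" by (rule norm_triangle_ineq)
    then have "(cmod (f x + g x))^2 \<le> (cmod (f x) + cmod (g x))^2"
      by (simp add: power_mono)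
    also have "\<dots> \<le> 2 * (cmod (f x))^2 + 2 * (cmod (g x))^2"
    proof -
      have "0 \<le> (cmod (f x) - cmod (g x))^2" by simp
      then show ?thesis by (simp add: power2_eq_square algebra_simps)
    qed
    finally show "(cmod (f x + g x))^2 \<le> 2 * (cmod (f x))^2 + 2 * (cmod (g x))^2" .
  qed simp
qed

lemma sq_summable_cmult:
  fixes f :: "'a \<Rightarrow> complex"
  assumes "(\<lambda>x. (cmod (f x))^2) summable_on A"
  shows "(\<lambda>x. (cmod (c * f x))^2) summable_on A"
  using summable_on_cmult_right[OF assms, of "(cmod c)^2"] by (simp add: norm_mult power_mult_distrib)

lemma sq_summable_diff:
  fixes f g :: "'a \<Rightarrow> complex"
  assumes "(\<lambda>x. (cmod (f x))^2) summable_on A" "(\<lambda>x. (cmod (g x))^2) summable_on A"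
  shows "(\<lambda>x. (cmod (f x - g x))^2) summable_on A"
  using sq_summable_add[OF assms(1), of "\<lambda>x. - g x"] assms(2) by simp

lemma sq_summable_sum:
  fixes f :: "'i \<Rightarrow> 'a \<Rightarrow> complex"
  assumes "finite I" "\<And>i. i \<in> I \<Longrightarrow> (\<lambda>x. (cmod (f i x))^2) summable_on A"
  shows "(\<lambda>x. (cmod (\<Sum>i\<in>I. f i x))^2) summable_on A"
  using assms
proof (induction I rule: finite_induct)
  case empty
  then show ?case by simp
next
  case (insert i I)
  then show ?case by (simp add: sq_summable_add)
qed

lemma sq_le_mult_if_AM_GM_bound:
  fixes S a b :: real
  assumes "0 \<le> S" "0 \<le> a" "0 \<le> b" and H: "\<And>t. t > 0 \<Longrightarrow> 2 * S \<le> t * a + b / t"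
  shows "S^2 \<le> a * b"
proof (cases "S = 0")
  case True then show ?thesis using assms by simp
next
  case False
  then have S: "S > 0" using assms by simp
  show ?thesis
  proof (cases "a = 0")
    case True
    have "2 * S \<le> b / ((b + 1) / S)" using H[of "(b + 1) / S"] S assms True by simp
    also have "\<dots> = b * S / (b + 1)" using S by (simp add: field_simps)
    also have "\<dots> < S" using S assms by (simp add: field_simps)
    finally show ?thesis using S by simp
  next
    case False
    then have a: "a > 0" using assms by simp
    have "2 * S \<le> (S / a) * a + b / (S / a)" using H[of "S / a"] S a by simp
    then have "2 * S \<le> S + b * a / S" using a S by (simp add: field_simps)
    then have "S \<le> b * a / S" by simp
    then have "S * S \<le> b * a" using S by (simp add: field_simps)
    then show ?thesis by (simp add: power2_eq_square mult.commute)
  qed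
qed

lemma Cauchy_Schwarz_infsum:
  fixes f g :: "'a \<Rightarrow> complex"
  assumes f: "(\<lambda>x. (cmod (f x))^2) summable_on A" and g: "(\<lambda>x. (cmod (g x))^2) summable_on A"
  shows "(cmod (\<Sum>\<^sub>\<infinity>x\<in>A. f x * g x))^2 \<le> (\<Sum>\<^sub>\<infinity>x\<in>A. (cmod (f x))^2) * (\<Sum>\<^sub>\<infinity>x\<in>A. (cmod (g x))^2)"
proof -
  define S where "S = (\<Sum>\<^sub>\<infinity>x\<in>A. norm (f x * g x))"
  have abs: "(\<lambda>x. norm (f x * g x)) summable_on A" by (rule sq_summable_mult_norm[OF f g])
  have n1: "cmod (\<Sum>\<^sub>\<infinity>x\<in>A. f x * g x) \<le> S"
    unfolding S_def using abs by (rule norm_infsum_bound)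
  have S0: "0 \<le> S" unfolding S_def by (rule infsum_nonneg) simp
  have "S^2 \<le> (\<Sum>\<^sub>\<infinity>x\<in>A. (cmod (f x))^2) * (\<Sum>\<^sub>\<infinity>x\<in>A. (cmod (g x))^2)"
  proof (rule sq_le_mult_if_AM_GM_bound[OF S0])
    show "0 \<le> (\<Sum>\<^sub>\<infinity>x\<in>A. (cmod (f x))^2)" by (rule infsum_nonneg) simp
    show "0 \<le> (\<Sum>\<^sub>\<infinity>x\<in>A. (cmod (g x))^2)" by (rule infsum_nonneg) simp
    fix t :: real assume t: "t > 0"
    have "2 * S = (\<Sum>\<^sub>\<infinity>x\<in>A. 2 * norm (f x * g x))"
      unfolding S_def by (rule infsum_cmult_right[symmetric]) (use abs in simp)
    also have "\<dots> \<le> (\<Sum>\<^sub>\<infinity>x\<in>A. t * (cmod (f x))^2 + (cmod (g x))^2 / t)"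
    proof (rule infsum_mono)
      show "(\<lambda>x. 2 * norm (f x * g x)) summable_on A" by (intro summable_on_cmult_right abs)
      show "(\<lambda>x. t * (cmod (f x))^2 + (cmod (g x))^2 / t) summable_on A"
        using summable_on_add[OF summable_on_cmult_right[OF f, of t] summable_on_cmult_left[OF g, of "1/t"]]
        by simp
      fix x
      have "0 \<le> (t * cmod (f x) - cmod (g x))^2 / t" using t by simp
      then show "2 * norm (f x * g x) \<le> t * (cmod (f x))^2 + (cmod (g x))^2 / t"
        using t by (simp add: norm_mult field_simps power2_eq_square)
    qed
    also have "\<dots> = t * (\<Sum>\<^sub>\<infinity>x\<in>A. (cmod (f x))^2) + (\<Sum>\<^sub>\<infinity>x\<in>A. (cmod (g x))^2) / t"
      using summable_on_cmult_right[OF f, of t] summable_on_cmult_left[OF g, of "inverse t"]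
      by (simp add: infsum_add infsum_cmult_right' infsum_cmult_left' divide_inverse)
    finally show "2 * S \<le> t * (\<Sum>\<^sub>\<infinity>x\<in>A. (cmod (f x))^2) + (\<Sum>\<^sub>\<infinity>x\<in>A. (cmod (g x))^2) / t" .
  qed
  moreover have "(cmod (\<Sum>\<^sub>\<infinity>x\<in>A. f x * g x))^2 \<le> S^2"
    using n1 by (simp add: power_mono)
  ultimately show ?thesis by linarith
qed

lemma norm_sum_sq_le_card:
  fixes z :: "nat \<Rightarrow> complex"
  assumes "finite I"
  shows "(cmod (\<Sum>k\<in>I. z k))^2 \<le> real (card I) * (\<Sum>k\<in>I. (cmod (z k))^2)"
  using Cauchy_Schwarz_infsum[of "\<lambda>_. 1" I z] assms by (simp add: infsum_finite)

lemma infsum_Sigma_bij: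
  fixes f :: "'c \<Rightarrow> 'v::{banach,complete_uniform_space,uniform_topological_group_add}"
  assumes bij: "bij_betw (\<lambda>(x,y). g x y) (Sigma A B) C" and sf: "f summable_on C"
  shows "infsum f C = (\<Sum>\<^sub>\<infinity>x\<in>A. \<Sum>\<^sub>\<infinity>y\<in>B x. f (g x y))"
    and "x \<in> A \<Longrightarrow> (\<lambda>y. f (g x y)) summable_on B x"
    and "(\<lambda>x. \<Sum>\<^sub>\<infinity>y\<in>B x. f (g x y)) summable_on A"
proof -
  have s2: "(\<lambda>p. f ((\<lambda>(x,y). g x y) p)) summable_on Sigma A B"
    using summable_on_reindex_bij_betw[OF bij] sf by blast
  then have s3: "(\<lambda>(x,y). f (g x y)) summable_on Sigma A B"
    by (simp add: case_prod_beta')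
  have "infsum f C = infsum (\<lambda>p. f ((\<lambda>(x,y). g x y) p)) (Sigma A B)"
    using infsum_reindex_bij_betw[OF bij, where f=f] by simp
  also have "\<dots> = infsum (\<lambda>(x,y). f (g x y)) (Sigma A B)" by (simp add: case_prod_beta')
  also have "\<dots> = (\<Sum>\<^sub>\<infinity>x\<in>A. \<Sum>\<^sub>\<infinity>y\<in>B x. f (g x y))"
    using infsum_Sigma'_banach[OF s3] by simp
  finally show "infsum f C = (\<Sum>\<^sub>\<infinity>x\<in>A. \<Sum>\<^sub>\<infinity>y\<in>B x. f (g x y))" .
  show "(\<lambda>x. \<Sum>\<^sub>\<infinity>y\<in>B x. f (g x y)) summable_on A"
    using summable_on_Sigma_banach[OF s3] by simp
  assume "x \<in> A"
  then show "(\<lambda>y. f (g x y)) summable_on B x"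
    using summable_on_SigmaD1[of "\<lambda>x y. f (g x y)", OF s3] by simp
qed

lemma summable_on_Sigma_bij:
  fixes f :: "'c \<Rightarrow> real"
  assumes bij: "bij_betw (\<lambda>(x,y). g x y) (Sigma A B) C"
    and nn: "\<And>z. z \<in> C \<Longrightarrow> 0 \<le> f z"
    and s1: "\<And>x. x \<in> A \<Longrightarrow> (\<lambda>y. f (g x y)) summable_on B x"
    and s2: "(\<lambda>x. \<Sum>\<^sub>\<infinity>y\<in>B x. f (g x y)) summable_on A"
  shows "f summable_on C"
proof -
  have mem: "x \<in> A \<Longrightarrow> y \<in> B x \<Longrightarrow> g x y \<in> C" for x y
    using bij_betwE[OF bij] by auto
  have "(\<lambda>(x,y). f (g x y)) summable_on Sigma A B"
    by (rule summable_on_SigmaI[where g="\<lambda>x. \<Sum>\<^sub>\<infinity>y\<in>B x. f (g x y)"])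
       (use s1 s2 nn mem in \<open>auto simp: summable_iff_has_sum_infsum\<close>)
  then have "(\<lambda>p. f ((\<lambda>(x,y). g x y) p)) summable_on Sigma A B"
    by (simp add: case_prod_beta')
  then show ?thesis using summable_on_reindex_bij_betw[OF bij] by blast
qed

section \<open>The one-particle space\<close>

lemma l2_cnj_prod_summable:
  assumes "l2 f" "l2 g"
  shows "(\<lambda>x. cnj (f x) * g x) summable_on UNIV"
  using sq_summable_mult[of "\<lambda>x. cnj (f x)" UNIV g] assms by (simp add: l2_def)

lemma l2_inner_has_sum:
  assumes "l2 f" "l2 g"
  shows "((\<lambda>x. cnj (f x) * g x) has_sum l2_inner f g) UNIV"
  using l2_cnj_prod_summable[OF assms] unfolding l2_inner_def by (simp add: summable_iff_has_sum_infsum)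

lemma l2_normsq_has_sum:
  assumes "l2 f"
  shows "((\<lambda>x. (cmod (f x))^2) has_sum l2_normsq f) UNIV"
  using assms unfolding l2_def l2_normsq_def by (simp add: summable_iff_has_sum_infsum)

lemma l2_normsq_inner:
  assumes "l2 f"
  shows "complex_of_real (l2_normsq f) = l2_inner f f"
proof -
  have "((\<lambda>x. complex_of_real ((cmod (f x))^2)) has_sum complex_of_real (l2_normsq f)) UNIV"
    by (rule has_sum_of_real[OF l2_normsq_has_sum[OF assms]])
  moreover have "(\<lambda>x. complex_of_real ((cmod (f x))^2)) = (\<lambda>x. cnj (f x) * f x)"
    by (rule ext) (metis complex_norm_square mult.commute)
  ultimately have "((\<lambda>x. cnj (f x) * f x) has_sum complex_of_real (l2_normsq f)) UNIV" by simp
  then show ?thesis using l2_inner_has_sum[OF assms assms] has_sum_unique by blast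
qed

lemma l2_normsq_nonneg: "0 \<le> l2_normsq f"
  unfolding l2_normsq_def by (rule infsum_nonneg) simp

lemma l2_diff: "l2 f \<Longrightarrow> l2 g \<Longrightarrow> l2 (\<lambda>x. f x - g x)"
  unfolding l2_def by (rule sq_summable_diff)

lemma l2_cmult: "l2 f \<Longrightarrow> l2 (\<lambda>x. c * f x)"
  unfolding l2_def by (rule sq_summable_cmult)

lemma l2_sum: "finite I \<Longrightarrow> (\<And>i. i \<in> I \<Longrightarrow> l2 (f i)) \<Longrightarrow> l2 (\<lambda>x. \<Sum>i\<in>I. f i x)"
  unfolding l2_def by (rule sq_summable_sum)

lemma l2_inner_cnj: "l2_inner f g = cnj (l2_inner g f)"
  unfolding l2_inner_def infsum_cnj[symmetric] by (simp add: mult.commute)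

lemma l2_inner_sum_right:
  assumes "finite I" "l2 f" "\<And>i. i \<in> I \<Longrightarrow> l2 (g i)"
  shows "l2_inner f (\<lambda>x. \<Sum>i\<in>I. c i * g i x) = (\<Sum>i\<in>I. c i * l2_inner f (g i))"
proof -
  have "((\<lambda>x. \<Sum>i\<in>I. c i * (cnj (f x) * g i x)) has_sum (\<Sum>i\<in>I. c i * l2_inner f (g i))) UNIV"
    by (rule has_sum_sum[OF assms(1)]) (intro has_sum_cmult_right l2_inner_has_sum assms)
  then have "((\<lambda>x. cnj (f x) * (\<Sum>i\<in>I. c i * g i x)) has_sum (\<Sum>i\<in>I. c i * l2_inner f (g i))) UNIV"
    by (simp add: sum_distrib_left algebra_simps)
  moreover have "l2 (\<lambda>x. \<Sum>i\<in>I. c i * g i x)"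
    using assms by (intro l2_sum l2_cmult) auto
  ultimately show ?thesis using l2_inner_has_sum[OF assms(2)] has_sum_unique by blast
qed

lemma l2_inner_sum_left:
  assumes "finite I" "l2 f" "\<And>i. i \<in> I \<Longrightarrow> l2 (g i)"
  shows "l2_inner (\<lambda>x. \<Sum>i\<in>I. c i * g i x) f = (\<Sum>i\<in>I. cnj (c i) * l2_inner (g i) f)"
proof -
  have "l2_inner (\<lambda>x. \<Sum>i\<in>I. c i * g i x) f = cnj (l2_inner f (\<lambda>x. \<Sum>i\<in>I. c i * g i x))"
    by (rule l2_inner_cnj)
  also have "\<dots> = cnj (\<Sum>i\<in>I. c i * l2_inner f (g i))" using l2_inner_sum_right[OF assms, where c=c] by simp
  also have "\<dots> = (\<Sum>i\<in>I. cnj (c i) * cnj (l2_inner f (g i)))" by simp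
  also have "\<dots> = (\<Sum>i\<in>I. cnj (c i) * l2_inner (g i) f)"
    by (metis l2_inner_cnj)
  finally show ?thesis .
qed

lemma l2_inner_diff_left:
  assumes "l2 f" "l2 g" "l2 h"
  shows "l2_inner (\<lambda>x. f x - g x) h = l2_inner f h - l2_inner g h"
proof -
  have "((\<lambda>x. cnj (f x) * h x - cnj (g x) * h x) has_sum (l2_inner f h - l2_inner g h)) UNIV"
    by (intro has_sum_diff l2_inner_has_sum assms)
  then have "((\<lambda>x. cnj (f x - g x) * h x) has_sum (l2_inner f h - l2_inner g h)) UNIV"
    by (simp add: algebra_simps)
  then show ?thesis using l2_inner_has_sum[OF l2_diff[OF assms(1,2)] assms(3)] has_sum_unique by blast
qed

lemma l2_inner_diff_right:
  assumes "l2 f" "l2 g" "l2 h"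
  shows "l2_inner h (\<lambda>x. f x - g x) = l2_inner h f - l2_inner h g"
  apply (subst l2_inner_cnj)
  apply (subst l2_inner_diff_left[OF assms])
  apply (simp add: l2_inner_cnj[of h])
  done

lemma l2_inner_Cauchy_Schwarz:
  assumes "l2 f" "l2 g"
  shows "(cmod (l2_inner f g))^2 \<le> l2_normsq f * l2_normsq g"
  using Cauchy_Schwarz_infsum[of "\<lambda>x. cnj (f x)" UNIV g] assms
  unfolding l2_inner_def l2_normsq_def l2_def by simp

lemma l2_tensor_summable:
  assumes "l2 f" "l2 g"
  shows "(\<lambda>(y,y'). (cmod (f y * g y'))^2) summable_on UNIV"
proof -
  have hs: "((\<lambda>y'. (cmod (f y * g y'))^2) has_sum (cmod (f y))^2 * l2_normsq g) UNIV" for y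
    using has_sum_cmult_right[OF l2_normsq_has_sum[OF assms(2)], of "(cmod (f y))^2"]
    by (simp add: norm_mult power_mult_distrib)
  have ss: "(\<lambda>y. (cmod (f y))^2 * l2_normsq g) summable_on UNIV"
    using summable_on_cmult_left assms(1) unfolding l2_def by blast
  have "(\<lambda>(y,y'). (cmod (f y * g y'))^2) summable_on Sigma UNIV (\<lambda>_. UNIV)"
    by (rule summable_on_SigmaI[where g="\<lambda>y. (cmod (f y))^2 * l2_normsq g"]) (use hs ss in auto)
  then show ?thesis by simp
qed

lemma l2_rows:
  assumes H: "(\<lambda>(y, y'). (cmod (H y y'))^2) summable_on UNIV"
  shows "l2 (H y)" and "(\<lambda>y. l2_normsq (H y)) summable_on UNIV"
proof -
  have H': "(\<lambda>(y, y'). (cmod (H y y'))^2) summable_on Sigma UNIV (\<lambda>_. UNIV)" using H by simp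
  show "l2 (H y)" using summable_on_SigmaD1[OF H'] unfolding l2_def by simp
  show "(\<lambda>y. l2_normsq (H y)) summable_on UNIV"
    using summable_on_Sigma_banach[OF H'] unfolding l2_normsq_def by simp
qed

lemma l2_inner_rows_l2:
  assumes f: "l2 f" and H: "(\<lambda>(y, y'). (cmod (H y y'))^2) summable_on UNIV"
  shows "l2 (\<lambda>y. l2_inner f (H y))"
proof -
  have "(\<lambda>y. l2_normsq f * l2_normsq (H y)) summable_on UNIV"
    by (rule summable_on_cmult_right[OF l2_rows(2)[OF H]])
  then show ?thesis unfolding l2_def
    by (rule summable_on_comparison_test) (use l2_inner_Cauchy_Schwarz[OF f l2_rows(1)[OF H]] in auto)
qed

lemma l2_inner_iterated_swap:
  assumes f: "l2 f" and g: "l2 g" and H: "(\<lambda>(y, y'). (cmod (H y y'))^2) summable_on UNIV"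
  shows "l2_inner f (\<lambda>y. l2_inner g (H y)) = l2_inner g (\<lambda>y'. l2_inner f (\<lambda>y. H y y'))"
proof -
  have t: "(\<lambda>(y, y'). (cmod (cnj (f y) * cnj (g y')))^2) summable_on UNIV"
    using l2_tensor_summable[OF f g] by (simp add: norm_mult)
  have "(\<lambda>p. (case p of (y, y') \<Rightarrow> cnj (f y) * cnj (g y')) * (case p of (y, y') \<Rightarrow> H y y')) summable_on UNIV"
    by (rule sq_summable_mult) (use t H in \<open>simp_all add: case_prod_beta'\<close>)
  then have s: "(\<lambda>(y, y'). cnj (f y) * (cnj (g y') * H y y')) summable_on UNIV \<times> UNIV"
    by (simp add: case_prod_beta' mult.assoc)
  have "l2_inner f (\<lambda>y. l2_inner g (H y)) = (\<Sum>\<^sub>\<infinity>y. \<Sum>\<^sub>\<infinity>y'. cnj (f y) * (cnj (g y') * H y y'))"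
    unfolding l2_inner_def by (simp add: infsum_cmult_right')
  also have "\<dots> = (\<Sum>\<^sub>\<infinity>y'. \<Sum>\<^sub>\<infinity>y. cnj (f y) * (cnj (g y') * H y y'))"
    by (rule infsum_swap_banach[OF s])
  also have "\<dots> = l2_inner g (\<lambda>y'. l2_inner f (\<lambda>y. H y y'))"
    unfolding l2_inner_def by (simp add: infsum_cmult_right'[symmetric] mult.left_commute)
  finally show ?thesis .
qed

section \<open>Fixed-particle-number layers\<close>

definition lists_of_length :: "nat \<Rightarrow> int list set" where "lists_of_length n = {zs. length zs = n}"

lemma lists_of_length_iff[simp]: "zs \<in> lists_of_length n \<longleftrightarrow> length zs = n" by (simp add: lists_of_length_def)

text \<open>One representative, with entry \<open>0\<close> at position \<open>c\<close>, of each line \<open>{zs[c := y] | y. True}\<close>.\<close>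

definition lists_zero_at :: "nat \<Rightarrow> nat \<Rightarrow> int list set" where "lists_zero_at n c = {zs. length zs = n \<and> zs ! c = 0}"

lemma bij_betw_list_update:
  assumes "c < n"
  shows "bij_betw (\<lambda>(zs,y). zs[c := y]) (Sigma (lists_zero_at n c) (\<lambda>_. UNIV :: int set)) (lists_of_length n)"
proof (rule bij_betwI')
  fix p q :: "int list \<times> int" assume p: "p \<in> Sigma (lists_zero_at n c) (\<lambda>_. UNIV)" and q: "q \<in> Sigma (lists_zero_at n c) (\<lambda>_. UNIV)"
  obtain zs y where pz: "p = (zs, y)" by (cases p)
  obtain zs' y' where qz: "q = (zs', y')" by (cases q)
  show "((\<lambda>(zs,y). zs[c := y]) p = (\<lambda>(zs,y). zs[c := y]) q) = (p = q)"
  proof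
    assume eq: "(\<lambda>(zs,y). zs[c := y]) p = (\<lambda>(zs,y). zs[c := y]) q"
    then have eq': "zs[c := y] = zs'[c := y']" by (simp add: pz qz)
    have l: "length zs = n" "length zs' = n" "zs ! c = 0" "zs' ! c = 0"
      using p q by (auto simp: pz qz lists_zero_at_def)
    have "y = y'" using arg_cong[OF eq', of "\<lambda>l. l ! c"] l assms by simp
    moreover have "zs = zs'"
    proof (rule nth_equalityI)
      show "length zs = length zs'" using l by simp
      fix i assume "i < length zs"
      then show "zs ! i = zs' ! i" using arg_cong[OF eq', of "\<lambda>l. l ! i"] l
        by (cases "i = c") auto
    qed
    ultimately show "p = q" by (simp add: pz qz)
  qed simp
next
  fix p :: "int list \<times> int" assume "p \<in> Sigma (lists_zero_at n c) (\<lambda>_. UNIV)"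
  then show "(\<lambda>(zs,y). zs[c := y]) p \<in> lists_of_length n" by (auto simp: lists_zero_at_def)
next
  fix zs assume "zs \<in> lists_of_length n"
  then have "(zs[c := 0], zs ! c) \<in> Sigma (lists_zero_at n c) (\<lambda>_. UNIV)" "zs = (\<lambda>(zs,y). zs[c := y]) (zs[c := 0], zs ! c)"
    using assms by (auto simp: lists_zero_at_def)
  then show "\<exists>p\<in>Sigma (lists_zero_at n c) (\<lambda>_. UNIV). zs = (\<lambda>(zs,y). zs[c := y]) p" by blast
qed

lemma bij_betw_Cons:
  "bij_betw (\<lambda>(y,ys). y # ys) (Sigma UNIV (\<lambda>_. lists_of_length k)) (lists_of_length (Suc k))"
  by (rule bij_betwI') (auto simp: length_Suc_conv)

lemma bij_betw_append:
  "bij_betw (\<lambda>(xs,ys). ys @ xs) (Sigma (lists_of_length m) (\<lambda>_. lists_of_length k)) (lists_of_length (k + m))"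
proof (rule bij_betwI')
  fix p q assume "p \<in> Sigma (lists_of_length m) (\<lambda>_. lists_of_length k)" "q \<in> Sigma (lists_of_length m) (\<lambda>_. lists_of_length k)"
  then show "((\<lambda>(xs,ys). ys @ xs) p = (\<lambda>(xs,ys). ys @ xs) q) = (p = q)"
    by (cases p, cases q) auto
next
  fix p assume "p \<in> Sigma (lists_of_length m) (\<lambda>_. lists_of_length k)"
  then show "(\<lambda>(xs,ys). ys @ xs) p \<in> lists_of_length (k + m)" by auto
next
  fix zs assume "zs \<in> lists_of_length (k + m)"
  then have "(drop k zs, take k zs) \<in> Sigma (lists_of_length m) (\<lambda>_. lists_of_length k)" "zs = (\<lambda>(xs,ys). ys @ xs) (drop k zs, take k zs)"
    by auto
  then show "\<exists>p\<in>Sigma (lists_of_length m) (\<lambda>_. lists_of_length k). zs = (\<lambda>(xs,ys). ys @ xs) p" by blast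
qed

lemma bij_betw_layers:
  "bij_betw (\<lambda>(m,zs). zs) (Sigma UNIV lists_of_length) (UNIV :: int list set)"
  by (rule bij_betwI') auto

definition layer_l2 :: "nat \<Rightarrow> (int list \<Rightarrow> complex) \<Rightarrow> bool" where
  "layer_l2 n g \<longleftrightarrow> (\<lambda>zs. (cmod (g zs))^2) summable_on lists_of_length n"

definition layer_normsq :: "nat \<Rightarrow> (int list \<Rightarrow> complex) \<Rightarrow> real" where
  "layer_normsq n g = (\<Sum>\<^sub>\<infinity>zs\<in>lists_of_length n. (cmod (g zs))^2)"

lemma layer_normsq_nonneg: "0 \<le> layer_normsq n g"
  unfolding layer_normsq_def by (rule infsum_nonneg) simp

lemma layer_normsq_cong: "(\<And>zs. length zs = n \<Longrightarrow> g zs = h zs) \<Longrightarrow> layer_normsq n g = layer_normsq n h"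
  unfolding layer_normsq_def by (intro infsum_cong) auto

lemma layer_l2_slice:
  assumes "layer_l2 n g" "length zs = n" "c < n"
  shows "l2 (\<lambda>y. g (zs[c := y]))"
proof -
  have inj: "inj (\<lambda>y. zs[c := y])"
    by (rule injI) (metis assms(2,3) nth_list_update_eq)
  have "(\<lambda>zs. (cmod (g zs))^2) summable_on range (\<lambda>y. zs[c := y])"
    using assms(1) unfolding layer_l2_def by (rule summable_on_subset) (auto simp: assms)
  then have "((\<lambda>zs. (cmod (g zs))^2) \<circ> (\<lambda>y. zs[c := y])) summable_on UNIV"
    using summable_on_reindex[OF inj] by blast
  then show ?thesis by (simp add: l2_def o_def)
qed

lemma layer_normsq_slices:
  assumes g: "layer_l2 n g" and c: "c < n"
  shows "(\<lambda>zs. l2_normsq (\<lambda>y. g (zs[c := y]))) summable_on lists_zero_at n c"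
    and "layer_normsq n g = (\<Sum>\<^sub>\<infinity>zs\<in>lists_zero_at n c. l2_normsq (\<lambda>y. g (zs[c := y])))"
  using infsum_Sigma_bij(1,3)[OF bij_betw_list_update[OF c] g[unfolded layer_l2_def]]
  unfolding layer_normsq_def l2_normsq_def by simp_all

lemma layer_l2_from_slices:
  assumes c: "c < n" and slices: "\<And>zs. zs \<in> lists_zero_at n c \<Longrightarrow> l2 (\<lambda>y. g (zs[c := y]))"
    and s: "(\<lambda>zs. l2_normsq (\<lambda>y. g (zs[c := y]))) summable_on lists_zero_at n c"
  shows "layer_l2 n g \<and> layer_normsq n g = (\<Sum>\<^sub>\<infinity>zs\<in>lists_zero_at n c. l2_normsq (\<lambda>y. g (zs[c := y])))"
proof
  show l: "layer_l2 n g"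
    unfolding layer_l2_def
    by (rule summable_on_Sigma_bij[OF bij_betw_list_update[OF c]])
       (use slices s in \<open>auto simp: l2_def l2_normsq_def\<close>)
  then show "layer_normsq n g = (\<Sum>\<^sub>\<infinity>zs\<in>lists_zero_at n c. l2_normsq (\<lambda>y. g (zs[c := y])))"
    by (rule layer_normsq_slices(2)[OF _ c])
qed

lemma layer_l2_slice2:
  assumes "layer_l2 n h" "length zs = n" "i < n" "j < n" "i \<noteq> j"
  shows "(\<lambda>(y,y'). (cmod (h (zs[i := y, j := y'])))^2) summable_on UNIV"
proof -
  have inj: "inj (\<lambda>(y::int,y'::int). zs[i := y, j := y'])"
  proof (rule injI)
    fix p q :: "int \<times> int"
    assume eq: "(\<lambda>(y,y'). zs[i := y, j := y']) p = (\<lambda>(y,y'). zs[i := y, j := y']) q"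
    obtain a b where p: "p = (a,b)" by (cases p)
    obtain c d where q: "q = (c,d)" by (cases q)
    have "zs[i := a, j := b] = zs[i := c, j := d]" using eq by (simp add: p q)
    from arg_cong[OF this, of "\<lambda>l. l ! i"] arg_cong[OF this, of "\<lambda>l. l ! j"]
    show "p = q" using assms by (simp add: p q)
  qed
  have "(\<lambda>zs. (cmod (h zs))^2) summable_on range (\<lambda>(y,y'). zs[i := y, j := y'])"
    using assms(1) unfolding layer_l2_def by (rule summable_on_subset) (auto simp: assms)
  then have "((\<lambda>zs. (cmod (h zs))^2) \<circ> (\<lambda>(y,y'). zs[i := y, j := y'])) summable_on UNIV"
    using summable_on_reindex[OF inj] by blast
  then show ?thesis by (simp add: o_def case_prod_beta')
qed

lemma layer_l2_append:
  assumes "layer_l2 (k + m) H" "length xs = m"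
  shows "layer_l2 k (\<lambda>ys. H (ys @ xs))"
proof -
  have inj: "inj_on (\<lambda>ys. ys @ xs) (lists_of_length k)" by (auto simp: inj_on_def)
  have "(\<lambda>zs. (cmod (H zs))^2) summable_on (\<lambda>ys. ys @ xs) ` lists_of_length k"
    using assms(1) unfolding layer_l2_def by (rule summable_on_subset) (auto simp: assms)
  then have "((\<lambda>zs. (cmod (H zs))^2) \<circ> (\<lambda>ys. ys @ xs)) summable_on lists_of_length k"
    using summable_on_reindex[OF inj] by blast
  then show ?thesis unfolding layer_l2_def by (simp add: o_def)
qed

lemma layer_normsq_append_has_sum:
  assumes "layer_l2 (k + m) F"
  shows "((\<lambda>xs. \<Sum>\<^sub>\<infinity>ys\<in>lists_of_length k. (cmod (F (ys @ xs)))^2) has_sum layer_normsq (k + m) F) (lists_of_length m)"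
  using infsum_Sigma_bij(1,3)[OF bij_betw_append[of m k] assms[unfolded layer_l2_def]]
  unfolding layer_normsq_def by (simp add: summable_iff_has_sum_infsum)

lemma layer_l2_mult_summable: "layer_l2 n f \<Longrightarrow> layer_l2 n g \<Longrightarrow> (\<lambda>zs. f zs * g zs) summable_on lists_of_length n"
  unfolding layer_l2_def by (rule sq_summable_mult)

lemma permute_list_list_update:
  assumes "\<sigma> permutes {..<length zs}" "c < length zs"
  shows "(permute_list \<sigma> zs)[c := y] = permute_list \<sigma> (zs[\<sigma> c := y])"
proof (rule nth_equalityI)
  show "length ((permute_list \<sigma> zs)[c := y]) = length (permute_list \<sigma> (zs[\<sigma> c := y]))" by simp
  fix i assume i: "i < length ((permute_list \<sigma> zs)[c := y])"
  have si: "\<sigma> i < length zs" "\<sigma> c < length zs" using permutes_in_image[OF assms(1)] i assms(2) by auto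
  have inj: "\<sigma> i = \<sigma> c \<longleftrightarrow> i = c" using permutes_inj[OF assms(1)] by (auto dest: injD)
  show "(permute_list \<sigma> zs)[c := y] ! i = permute_list \<sigma> (zs[\<sigma> c := y]) ! i"
    using i si inj assms by (auto simp: permute_list_nth nth_list_update)
qed

lemma bij_betw_permute_list:
  assumes "\<sigma> permutes {..<n}"
  shows "bij_betw (permute_list \<sigma>) (lists_of_length n) (lists_of_length n)"
proof (rule bij_betwI[where g="permute_list (inv \<sigma>)"])
  have iv: "inv \<sigma> permutes {..<n}" by (rule permutes_inv[OF assms])
  show "permute_list \<sigma> \<in> lists_of_length n \<rightarrow> lists_of_length n" by simp
  show "permute_list (inv \<sigma>) \<in> lists_of_length n \<rightarrow> lists_of_length n" by simp
  fix zs assume "zs \<in> lists_of_length n"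
  then show "permute_list (inv \<sigma>) (permute_list \<sigma> zs) = zs"
    using permute_list_compose[of "inv \<sigma>" zs \<sigma>] assms iv
    by (metis lists_of_length_iff permute_list_compose permute_list_id permutes_inv_o(1) permutes_inv_o(2))
next
  fix zs assume "zs \<in> lists_of_length n"
  then show "permute_list \<sigma> (permute_list (inv \<sigma>) zs) = zs"
    using assms permutes_inv[OF assms]
    by (metis lists_of_length_iff permute_list_compose permute_list_id permutes_inv_o(1) permutes_inv_o(2))
qed

lemma layer_normsq_permute_list:
  assumes "\<sigma> permutes {..<n}"
  shows "layer_normsq n (\<lambda>z. h (permute_list \<sigma> z)) = layer_normsq n h"
  unfolding layer_normsq_def using infsum_reindex_bij_betw[OF bij_betw_permute_list[OF assms], of "\<lambda>z. (cmod (h z))^2"] by simp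

lemma permutes_onto_initial_segment:
  assumes "S \<subseteq> {..<n}" "card S = k"
  obtains \<tau> where "\<tau> permutes {..<n}" "\<And>i. i < n \<Longrightarrow> \<tau> i < k \<longleftrightarrow> i \<in> S"
proof -
  have finS: "finite S" using assms(1) finite_subset by blast
  have kn: "k \<le> n" using card_mono[OF _ assms(1)] assms(2) by simp
  obtain f1 where f1: "bij_betw f1 S {..<k}" using finite_same_card_bij[OF finS, of "{..<k}"] assms by auto
  have c2: "card ({..<n} - S) = card {k..<n}" using assms kn by (simp add: card_Diff_subset finS)
  obtain f2 where f2: "bij_betw f2 ({..<n} - S) {k..<n}" using finite_same_card_bij[OF _ _ c2] by auto
  define \<tau> where "\<tau> i = (if i \<in> S then f1 i else if i < n then f2 i else i)" for i
  have b1: "bij_betw \<tau> S {..<k}" using f1 by (rule bij_betw_cong[THEN iffD1, rotated]) (simp add: \<tau>_def)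
  have b2: "bij_betw \<tau> ({..<n} - S) {k..<n}" using f2 by (rule bij_betw_cong[THEN iffD1, rotated]) (simp add: \<tau>_def)
  have "bij_betw \<tau> (S \<union> ({..<n} - S)) ({..<k} \<union> {k..<n})" by (rule bij_betw_combine[OF b1 b2]) auto
  moreover have "S \<union> ({..<n} - S) = {..<n}" "{..<k} \<union> {k..<n} = {..<n}" using assms(1) kn by auto
  ultimately have "bij_betw \<tau> {..<n} {..<n}" by simp
  then have "\<tau> permutes {..<n}" by (rule bij_imp_permutes) (use assms(1) in \<open>auto simp: \<tau>_def\<close>)
  moreover have "\<tau> i < k \<longleftrightarrow> i \<in> S" if "i < n" for i
  proof (cases "i \<in> S")
    case True then show ?thesis using bij_betwE[OF b1] by auto
  next
    case False
    have "\<tau> i \<in> {k..<n}" using bij_betwE[OF b2] that False by blast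
    then show ?thesis using False by simp
  qed
  ultimately show ?thesis using that by blast
qed

definition cnj_tensor :: "(int \<Rightarrow> complex) \<Rightarrow> int list \<Rightarrow> complex" where
  "cnj_tensor v ys = prod_list (map (\<lambda>y. cnj (v y)) ys)"

lemma cnj_tensor_Nil[simp]: "cnj_tensor v [] = 1" and cnj_tensor_Cons[simp]: "cnj_tensor v (y # ys) = cnj (v y) * cnj_tensor v ys"
  by (simp_all add: cnj_tensor_def)

lemma cnj_tensor_has_sum:
  assumes "l2 v"
  shows "((\<lambda>ys. (cmod (cnj_tensor v ys))^2) has_sum (l2_normsq v)^k) (lists_of_length k)"
proof (induction k)
  case 0
  have "lists_of_length 0 = {[]}" by auto
  then show ?case by (simp add: has_sum_finiteI)
next
  case (Suc k)
  note bij = bij_betw_Cons[of k]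
  have inner: "((\<lambda>ys. (cmod (cnj_tensor v (y # ys)))^2) has_sum (cmod (v y))^2 * (l2_normsq v)^k) (lists_of_length k)" for y
    using has_sum_cmult_right[OF Suc.IH, of "(cmod (v y))^2"] by (simp add: norm_mult power_mult_distrib)
  have outer: "((\<lambda>y. (cmod (v y))^2 * (l2_normsq v)^k) has_sum (l2_normsq v)^(Suc k)) UNIV"
    using has_sum_cmult_left[OF l2_normsq_has_sum[OF assms], of "(l2_normsq v)^k"] by (simp add: mult.commute)
  have s: "(\<lambda>ys. (cmod (cnj_tensor v ys))^2) summable_on lists_of_length (Suc k)"
  proof (rule summable_on_Sigma_bij[OF bij])
    show "y \<in> UNIV \<Longrightarrow> (\<lambda>ys. (cmod (cnj_tensor v (y # ys)))^2) summable_on lists_of_length k" for y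
      using inner has_sum_imp_summable by blast
    have "(\<lambda>y. \<Sum>\<^sub>\<infinity>ys\<in>lists_of_length k. (cmod (cnj_tensor v (y # ys)))^2) = (\<lambda>y. (cmod (v y))^2 * (l2_normsq v)^k)"
      using inner infsumI by blast
    then show "(\<lambda>y. \<Sum>\<^sub>\<infinity>ys\<in>lists_of_length k. (cmod (cnj_tensor v (y # ys)))^2) summable_on UNIV"
      using outer has_sum_imp_summable by metis
  qed simp
  have "infsum (\<lambda>ys. (cmod (cnj_tensor v ys))^2) (lists_of_length (Suc k)) = (\<Sum>\<^sub>\<infinity>y. \<Sum>\<^sub>\<infinity>ys\<in>lists_of_length k. (cmod (cnj_tensor v (y # ys)))^2)"
    using infsum_Sigma_bij(1)[OF bij s] by simp
  also have "\<dots> = (\<Sum>\<^sub>\<infinity>y. (cmod (v y))^2 * (l2_normsq v)^k)"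
    using inner infsumI by (intro infsum_cong) blast
  also have "\<dots> = (l2_normsq v)^(Suc k)"
    using outer infsumI by blast
  finally show ?case using s by (simp add: summable_iff_has_sum_infsum)
qed

lemma layer_l2_cnj_tensor: "l2 v \<Longrightarrow> layer_l2 k (cnj_tensor v)"
  using cnj_tensor_has_sum unfolding layer_l2_def by (blast intro: has_sum_imp_summable)

lemma layer_normsq_cnj_tensor: "l2 v \<Longrightarrow> layer_normsq k (cnj_tensor v) = (l2_normsq v)^k"
  using cnj_tensor_has_sum unfolding layer_normsq_def by (blast intro: infsumI)

lemma cnj_tensor_list_update:
  assumes "c < length zs"
  shows "cnj_tensor v (zs[c := y]) = cnj (v y) * (cnj_tensor v (take c zs) * cnj_tensor v (drop (Suc c) zs))"
  using assms by (simp add: upd_conv_take_nth_drop cnj_tensor_def)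

lemma fock_vec_layer_l2: "fock_vec \<psi> \<Longrightarrow> layer_l2 n \<psi>"
  unfolding fock_vec_def layer_l2_def using summable_on_subset[of _ UNIV "lists_of_length n"] by blast

lemma fock_vec_permute_list: "fock_vec \<psi> \<Longrightarrow> length zs = n \<Longrightarrow> \<sigma> permutes {..<n} \<Longrightarrow> \<psi> (permute_list \<sigma> zs) = \<psi> zs"
  unfolding fock_vec_def by (metis mset_permute_list)

lemma fock_normsq_layers:
  assumes "(\<lambda>zs. (cmod (g zs))^2) summable_on UNIV"
  shows "fock_normsq g = (\<Sum>\<^sub>\<infinity>m. layer_normsq m g)" "(\<lambda>m. layer_normsq m g) summable_on UNIV"
  using infsum_Sigma_bij(1,3)[OF bij_betw_layers assms] unfolding fock_normsq_def layer_normsq_def by simp_all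

lemma fock_summable_from_layers:
  assumes "\<And>m. layer_l2 m g" "(\<lambda>m. layer_normsq m g) summable_on UNIV"
  shows "(\<lambda>zs. (cmod (g zs))^2) summable_on UNIV"
  by (rule summable_on_Sigma_bij[OF bij_betw_layers]) (use assms in \<open>auto simp: layer_l2_def layer_normsq_def\<close>)

lemma layer_normsq_shift:
  assumes s: "(\<lambda>m. layer_normsq m \<psi>) summable_on UNIV"
  shows "(\<lambda>m. layer_normsq (k + m) \<psi>) summable_on UNIV" "(\<Sum>\<^sub>\<infinity>m. layer_normsq (k + m) \<psi>) \<le> (\<Sum>\<^sub>\<infinity>m. layer_normsq m \<psi>)"
proof -
  have inj: "inj (\<lambda>m::nat. k + m)" by (rule injI) simp
  have s1: "(\<lambda>n. layer_normsq n \<psi>) summable_on range (\<lambda>m. k + m)"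
    using summable_on_subset[OF s] by blast
  then have "((\<lambda>n. layer_normsq n \<psi>) \<circ> (\<lambda>m. k + m)) summable_on UNIV"
    using summable_on_reindex[OF inj] by blast
  then show s2: "(\<lambda>m. layer_normsq (k + m) \<psi>) summable_on UNIV" by (simp add: o_def)
  have "(\<Sum>\<^sub>\<infinity>m. layer_normsq (k + m) \<psi>) = (\<Sum>\<^sub>\<infinity>n\<in>range (\<lambda>m. k + m). layer_normsq n \<psi>)"
    using infsum_reindex[OF inj, of "\<lambda>n. layer_normsq n \<psi>"] by (simp add: o_def)
  also have "\<dots> \<le> (\<Sum>\<^sub>\<infinity>m. layer_normsq m \<psi>)"
    by (rule infsum_mono2[OF s1 s]) (auto simp: layer_normsq_nonneg)
  finally show "(\<Sum>\<^sub>\<infinity>m. layer_normsq (k + m) \<psi>) \<le> (\<Sum>\<^sub>\<infinity>m. layer_normsq m \<psi>)" .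
qed

section \<open>Products of one-particle projections\<close>

definition PQ_at :: "nat \<Rightarrow> (nat \<Rightarrow> int \<Rightarrow> complex) \<Rightarrow> nat \<times> bool \<Rightarrow> (int list \<Rightarrow> complex) \<Rightarrow> (int list \<Rightarrow> complex)" where
  "PQ_at J e p g = (if snd p then P_at J e (fst p) g else Q_at J e (fst p) g)"

definition PQ_ops :: "nat \<Rightarrow> (nat \<Rightarrow> int \<Rightarrow> complex) \<Rightarrow> (nat \<times> bool) list \<Rightarrow> (int list \<Rightarrow> complex) \<Rightarrow> (int list \<Rightarrow> complex)" where
  "PQ_ops J e ps h = fold (PQ_at J e) ps h"

lemma PQ_ops_Nil[simp]: "PQ_ops J e [] h = h" by (simp add: PQ_ops_def)

lemma PQ_ops_Cons[simp]: "PQ_ops J e (p # ps) h = PQ_ops J e ps (PQ_at J e p h)" by (simp add: PQ_ops_def)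

lemma PQ_ops_append[simp]: "PQ_ops J e (ps @ qs) h = PQ_ops J e qs (PQ_ops J e ps h)" by (simp add: PQ_ops_def)

lemma P_at_cong:
  assumes "\<And>zs. length zs = n \<Longrightarrow> g zs = h zs" "length zs = n" "c < n"
  shows "P_at J e c g zs = P_at J e c h zs"
  unfolding P_at_def using assms by simp

lemma PQ_at_cong:
  assumes "\<And>zs. length zs = n \<Longrightarrow> g zs = h zs" "length zs = n" "fst p < n"
  shows "PQ_at J e p g zs = PQ_at J e p h zs"
  using P_at_cong[OF assms] assms unfolding PQ_at_def Q_at_def by simp

lemma PQ_ops_cong:
  assumes "\<And>zs. length zs = n \<Longrightarrow> g zs = h zs" "length zs = n" "\<forall>p\<in>set ps. fst p < n"
  shows "PQ_ops J e ps g zs = PQ_ops J e ps h zs"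
  using assms
proof (induction ps arbitrary: g h zs)
  case Nil then show ?case by simp
next
  case (Cons p ps)
  show ?case unfolding PQ_ops_Cons
    by (rule Cons.IH) (use Cons.prems in \<open>auto intro: PQ_at_cong\<close>)
qed

lemma P_at_permute_list:
  assumes "\<sigma> permutes {..<n}" "length zs = n" "c < n"
  shows "P_at J e c h (permute_list \<sigma> zs) = P_at J e (\<sigma> c) (\<lambda>z. h (permute_list \<sigma> z)) zs"
  unfolding P_at_def using assms by (simp add: permute_list_list_update permute_list_nth)

lemma PQ_at_permute_list:
  assumes "\<sigma> permutes {..<n}" "length zs = n" "fst p < n"
  shows "PQ_at J e p h (permute_list \<sigma> zs) = PQ_at J e (\<sigma> (fst p), snd p) (\<lambda>z. h (permute_list \<sigma> z)) zs"
  using P_at_permute_list[OF assms] assms by (simp add: PQ_at_def Q_at_def permute_list_nth)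

lemma PQ_ops_permute_list:
  assumes "\<sigma> permutes {..<n}" "length zs = n" "\<forall>p\<in>set ps. fst p < n"
  shows "PQ_ops J e ps h (permute_list \<sigma> zs) = PQ_ops J e (map (\<lambda>(c,b). (\<sigma> c, b)) ps) (\<lambda>z. h (permute_list \<sigma> z)) zs"
  using assms(2,3)
proof (induction ps arbitrary: h zs)
  case Nil then show ?case by simp
next
  case (Cons p ps)
  have "PQ_ops J e (p # ps) h (permute_list \<sigma> zs) = PQ_ops J e ps (PQ_at J e p h) (permute_list \<sigma> zs)" by simp
  also have "\<dots> = PQ_ops J e (map (\<lambda>(c,b). (\<sigma> c, b)) ps) (\<lambda>z. PQ_at J e p h (permute_list \<sigma> z)) zs"
    using Cons by simp
  also have "\<dots> = PQ_ops J e (map (\<lambda>(c,b). (\<sigma> c, b)) ps) (PQ_at J e (\<sigma> (fst p), snd p) (\<lambda>z. h (permute_list \<sigma> z))) zs"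
  proof (rule PQ_ops_cong[where n=n])
    show "\<forall>q\<in>set (map (\<lambda>(c,b). (\<sigma> c, b)) ps). fst q < n"
      using Cons.prems permutes_in_image[OF assms(1)] by auto
  qed (use Cons.prems PQ_at_permute_list[OF assms(1)] in auto)
  finally show ?case by (simp add: case_prod_beta')
qed

text \<open>The operator \<open>P^\<otimes>k \<otimes> Q^\<otimes>(n - k)\<close> of the coherent contraction.\<close>

definition PQ_block :: "nat \<Rightarrow> nat \<Rightarrow> (nat \<times> bool) list" where
  "PQ_block k n = map (\<lambda>c. (c, False)) [k..<n] @ map (\<lambda>c. (c, True)) [0..<k]"

definition PQ_pattern :: "nat \<Rightarrow> nat set \<Rightarrow> (nat \<times> bool) list" where
  "PQ_pattern n S = zip [0..<n] (map (\<lambda>i. i \<in> S) [0..<n])"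

lemma mset_PQ_block:
  assumes "k \<le> n"
  shows "mset (PQ_block k n) = mset (map (\<lambda>d. (d, d < k)) [0..<n])"
proof -
  have u: "[0..<n] = [0..<k] @ [k..<n]" using assms by (metis le_add_same_cancel1 le_add_diff_inverse upt_add_eq_append zero_le)
  have a: "map (\<lambda>d. (d, d < k)) [0..<k] = map (\<lambda>c. (c, True)) [0..<k]" by simp
  have b: "map (\<lambda>d. (d, d < k)) [k..<n] = map (\<lambda>c. (c, False)) [k..<n]" by simp
  show ?thesis unfolding PQ_block_def u map_append a b by (simp add: add.commute)
qed

lemma P_at_append:
  assumes "length ys = k" "c < k"
  shows "P_at J e c H (ys @ xs) = P_at J e c (\<lambda>ys'. H (ys' @ xs)) ys"
  using assms by (simp add: P_at_def nth_append list_update_append1)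

lemma PQ_at_append:
  assumes "length ys = k" "fst p < k"
  shows "PQ_at J e p H (ys @ xs) = PQ_at J e p (\<lambda>ys'. H (ys' @ xs)) ys"
  using P_at_append[OF assms] by (simp add: PQ_at_def Q_at_def)

lemma PQ_ops_append_slice:
  assumes "length ys = k" "\<forall>p\<in>set ps. fst p < k"
  shows "PQ_ops J e ps H (ys @ xs) = PQ_ops J e ps (\<lambda>ys'. H (ys' @ xs)) ys"
  using assms
proof (induction ps arbitrary: H ys)
  case Nil then show ?case by simp
next
  case (Cons p ps)
  have "PQ_ops J e (p # ps) H (ys @ xs) = PQ_ops J e ps (\<lambda>ys'. PQ_at J e p H (ys' @ xs)) ys"
    using Cons by simp
  also have "\<dots> = PQ_ops J e ps (PQ_at J e p (\<lambda>ys'. H (ys' @ xs))) ys"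
    by (rule PQ_ops_cong[where n=k]) (use Cons.prems PQ_at_append in auto)
  finally show ?case by simp
qed

lemma Q_coords_conv_PQ_ops: "Q_coords J e cs g = PQ_ops J e (map (\<lambda>c. (c, False)) cs) g"
  by (induction cs arbitrary: g) (simp_all add: Q_coords_def PQ_at_def)

lemma PQ_at_zero: "PQ_at J e p (\<lambda>_. 0) = (\<lambda>_. 0)"
  by (simp add: PQ_at_def Q_at_def P_at_def fun_eq_iff)

lemma PQ_ops_zero: "PQ_ops J e ps (\<lambda>_. 0) = (\<lambda>_. 0)"
  by (induction ps) (simp_all add: PQ_at_zero)

lemma PQ_ops_vanishing:
  assumes "\<forall>p\<in>set ps. fst p < n" "length zs = n" "\<And>z. length z = n \<Longrightarrow> h z = 0"
  shows "PQ_ops J e ps h zs = 0"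
proof -
  have "PQ_ops J e ps h zs = PQ_ops J e ps (\<lambda>_. 0) zs" by (rule PQ_ops_cong[where n=n]) (use assms in auto)
  then show ?thesis by (simp add: PQ_ops_zero)
qed

section \<open>Projections onto the span of an orthonormal family\<close>

context
  fixes J :: nat and e :: "nat \<Rightarrow> int \<Rightarrow> complex"
  assumes onf: "orthonormal_fam J e"
begin

lemma onf_l2: "j < J \<Longrightarrow> l2 (e j)"
  using onf unfolding orthonormal_fam_def by auto

lemma onf_inner: "i < J \<Longrightarrow> j < J \<Longrightarrow> l2_inner (e i) (e j) = (if i = j then 1 else 0)"
  using onf unfolding orthonormal_fam_def by auto

lemma proj_l2: "l2 (proj J e f)"
  unfolding proj_def by (intro l2_sum l2_cmult onf_l2) auto

lemma vec_of_l2: "l2 (vec_of J e w)"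
  unfolding vec_of_def by (intro l2_sum l2_cmult onf_l2) auto

lemma inner_e_vec_of: "i < J \<Longrightarrow> l2_inner (e i) (vec_of J e w) = w i"
  unfolding vec_of_def
  by (subst l2_inner_sum_right) (auto simp: onf_l2 onf_inner if_distrib cong: if_cong)

lemma inner_e_proj: "i < J \<Longrightarrow> l2_inner (e i) (proj J e f) = l2_inner (e i) f"
  unfolding proj_def
  by (subst l2_inner_sum_right) (auto simp: onf_l2 onf_inner if_distrib cong: if_cong)

lemma proj_vec_of: "proj J e (vec_of J e w) = vec_of J e w"
proof (rule ext)
  fix x
  have "proj J e (vec_of J e w) x = (\<Sum>j<J. l2_inner (e j) (vec_of J e w) * e j x)"
    by (simp add: proj_def)
  also have "\<dots> = (\<Sum>j<J. w j * e j x)" by (rule sum.cong) (simp_all add: inner_e_vec_of)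
  finally show "proj J e (vec_of J e w) x = vec_of J e w x" by (simp add: vec_of_def)
qed

lemma inner_vec_of_left: "l2 f \<Longrightarrow> l2_inner (vec_of J e w) f = (\<Sum>j<J. cnj (w j) * l2_inner (e j) f)"
  unfolding vec_of_def by (subst l2_inner_sum_left) (auto simp: onf_l2)

lemma inner_vec_of_proj: "l2 f \<Longrightarrow> l2_inner (vec_of J e w) (proj J e f) = l2_inner (vec_of J e w) f"
  by (simp add: inner_vec_of_left proj_l2 inner_e_proj)

lemma normsq_vec_of: "l2_normsq (vec_of J e w) = (\<Sum>j<J. (cmod (w j))^2)"
proof -
  have "complex_of_real (l2_normsq (vec_of J e w)) = (\<Sum>j<J. cnj (w j) * w j)"
    by (simp add: l2_normsq_inner vec_of_l2 inner_vec_of_left inner_e_vec_of)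
  also have "\<dots> = complex_of_real (\<Sum>j<J. (cmod (w j))^2)"
    by (simp only: of_real_sum) (rule sum.cong, simp, metis complex_norm_square mult.commute)
  finally show ?thesis by (simp only: of_real_eq_iff)
qed

lemma normsq_proj_pythagoras:
  assumes "l2 f"
  shows "l2_normsq f = l2_normsq (proj J e f) + l2_normsq (\<lambda>x. f x - proj J e f x)"
proof -
  define c where "c j = l2_inner (e j) f" for j
  define S where "S = (\<Sum>j<J. cnj (c j) * c j)"
  have Pf: "l2 (proj J e f)" by (rule proj_l2)
  have PP: "l2_inner (proj J e f) (proj J e f) = S"
    unfolding proj_def[of J e f] S_def c_def
    by (subst l2_inner_sum_left) (auto simp: onf_l2 proj_l2 inner_e_proj proj_def[symmetric])
  have fP: "l2_inner f (proj J e f) = S"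
    unfolding proj_def[of J e f] S_def c_def
    by (subst l2_inner_sum_right) (auto simp: onf_l2 assms l2_inner_cnj[of f] mult.commute)
  have Pf2: "l2_inner (proj J e f) f = S"
    unfolding proj_def[of J e f] S_def c_def
    by (subst l2_inner_sum_left) (auto simp: onf_l2 assms)
  have D: "l2 (\<lambda>x. f x - proj J e f x)" by (intro l2_diff assms Pf)
  have "complex_of_real (l2_normsq (\<lambda>x. f x - proj J e f x))
      = l2_inner f f - l2_inner (proj J e f) f - (l2_inner f (proj J e f) - l2_inner (proj J e f) (proj J e f))"
    by (simp add: l2_normsq_inner D l2_inner_diff_left l2_inner_diff_right assms Pf)
  also have "\<dots> = l2_inner f f - S" by (simp add: PP fP Pf2)
  also have "\<dots> = complex_of_real (l2_normsq f) - complex_of_real (l2_normsq (proj J e f))"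
    by (simp add: l2_normsq_inner assms Pf PP)
  finally show ?thesis by (metis add_diff_cancel_left' diff_add_cancel of_real_diff of_real_eq_iff)
qed

lemma P_at_slice:
  assumes "length zs = n" "c < n"
  shows "P_at J e c g (zs[c := y]) = proj J e (\<lambda>t. g (zs[c := t])) y"
  using assms by (simp add: P_at_def proj_def l2_inner_def mult.commute)

lemma Q_at_slice:
  assumes "length zs = n" "c < n"
  shows "Q_at J e c g (zs[c := y]) = g (zs[c := y]) - proj J e (\<lambda>t. g (zs[c := t])) y"
  using P_at_slice[OF assms] by (simp add: Q_at_def)

lemma P_at_Q_at_pythagoras:
  assumes g: "layer_l2 n g" and c: "c < n"
  shows "layer_l2 n (P_at J e c g)" "layer_l2 n (Q_at J e c g)"
    "layer_normsq n g = layer_normsq n (P_at J e c g) + layer_normsq n (Q_at J e c g)"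
proof -
  define sl where "sl zs = (\<lambda>t. g (zs[c := t]))" for zs
  have len: "zs \<in> lists_zero_at n c \<Longrightarrow> length zs = n" for zs by (simp add: lists_zero_at_def)
  have sl: "zs \<in> lists_zero_at n c \<Longrightarrow> l2 (sl zs)" for zs
    unfolding sl_def by (rule layer_l2_slice[OF g _ c]) (simp add: len)
  note g_slices = layer_normsq_slices[OF g c, folded sl_def]
  have pyth: "zs \<in> lists_zero_at n c \<Longrightarrow>
      l2_normsq (sl zs) = l2_normsq (proj J e (sl zs)) + l2_normsq (\<lambda>y. sl zs y - proj J e (sl zs) y)" for zs
    using normsq_proj_pythagoras[OF sl] by simp
  have P_slice: "(\<lambda>y. P_at J e c g (zs[c := y])) = proj J e (sl zs)" if "zs \<in> lists_zero_at n c" for zs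
    using P_at_slice[OF len[OF that] c] unfolding sl_def by (simp add: fun_eq_iff)
  have Q_slice: "(\<lambda>y. Q_at J e c g (zs[c := y])) = (\<lambda>y. sl zs y - proj J e (sl zs) y)" if "zs \<in> lists_zero_at n c" for zs
    using Q_at_slice[OF len[OF that] c] unfolding sl_def by (simp add: fun_eq_iff)
  have sP: "(\<lambda>zs. l2_normsq (proj J e (sl zs))) summable_on lists_zero_at n c"
    by (rule summable_on_comparison_test[OF g_slices(1)]) (use pyth l2_normsq_nonneg in auto)
  then have P: "layer_l2 n (P_at J e c g) \<and>
      layer_normsq n (P_at J e c g) = (\<Sum>\<^sub>\<infinity>zs\<in>lists_zero_at n c. l2_normsq (proj J e (sl zs)))"
    using layer_l2_from_slices[OF c, of "P_at J e c g"] proj_l2 by (simp add: P_slice cong: infsum_cong summable_on_cong)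
  have sQ: "(\<lambda>zs. l2_normsq (\<lambda>y. sl zs y - proj J e (sl zs) y)) summable_on lists_zero_at n c"
    by (rule summable_on_comparison_test[OF g_slices(1)]) (use pyth l2_normsq_nonneg in auto)
  then have Q: "layer_l2 n (Q_at J e c g) \<and>
      layer_normsq n (Q_at J e c g) = (\<Sum>\<^sub>\<infinity>zs\<in>lists_zero_at n c. l2_normsq (\<lambda>y. sl zs y - proj J e (sl zs) y))"
    using layer_l2_from_slices[OF c, of "Q_at J e c g"] l2_diff[OF sl proj_l2]
    by (simp add: Q_slice cong: infsum_cong summable_on_cong)
  show "layer_l2 n (P_at J e c g)" "layer_l2 n (Q_at J e c g)" using P Q by simp_all
  show "layer_normsq n g = layer_normsq n (P_at J e c g) + layer_normsq n (Q_at J e c g)"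
    using P Q g_slices(2) by (simp add: pyth infsum_add[OF sP sQ] cong: infsum_cong)
qed

lemma P_at_conv_inner: "P_at J e c g zs = (\<Sum>a<J. e a (zs ! c) * l2_inner (e a) (\<lambda>y. g (zs[c := y])))"
  by (simp add: P_at_def l2_inner_def)

lemma P_at_diff:
  assumes "l2 (\<lambda>y. g1 (zs[c := y]))" "l2 (\<lambda>y. g2 (zs[c := y]))"
  shows "P_at J e c (\<lambda>z. g1 z - g2 z) zs = P_at J e c g1 zs - P_at J e c g2 zs"
  unfolding P_at_conv_inner sum_subtractf[symmetric]
  by (rule sum.cong) (simp_all add: l2_inner_diff_right[OF assms onf_l2] algebra_simps)

lemma P_at_P_at_conv_inner:
  assumes h: "layer_l2 n h" and zs: "length zs = n" and ij: "i < n" "j < n" "i \<noteq> j"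
  shows "P_at J e i (P_at J e j h) zs = (\<Sum>a<J. \<Sum>b<J. e a (zs ! i) * e b (zs ! j)
    * l2_inner (e a) (\<lambda>y. l2_inner (e b) (\<lambda>y'. h (zs[i := y, j := y']))))"
proof -
  define H where "H y y' = h (zs[i := y, j := y'])" for y y'
  have H: "(\<lambda>(y, y'). (cmod (H y y'))^2) summable_on UNIV"
    unfolding H_def by (rule layer_l2_slice2[OF h zs ij])
  have inner: "P_at J e j h (zs[i := y]) = (\<Sum>b<J. e b (zs ! j) * l2_inner (e b) (H y))" for y
    unfolding P_at_conv_inner H_def using ij zs by simp
  have "P_at J e i (P_at J e j h) zs
      = (\<Sum>a<J. e a (zs ! i) * l2_inner (e a) (\<lambda>y. \<Sum>b<J. e b (zs ! j) * l2_inner (e b) (H y)))"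
    unfolding P_at_conv_inner[of i] inner ..
  also have "\<dots> = (\<Sum>a<J. e a (zs ! i) * (\<Sum>b<J. e b (zs ! j) * l2_inner (e a) (\<lambda>y. l2_inner (e b) (H y))))"
    by (intro sum.cong refl arg_cong2[where f = "(*)"] l2_inner_sum_right)
       (auto intro: onf_l2 l2_inner_rows_l2[OF _ H])
  finally show ?thesis by (simp add: H_def[abs_def] sum_distrib_left mult.assoc)
qed

lemma P_at_commute:
  assumes h: "layer_l2 n h" and zs: "length zs = n" and ij: "i < n" "j < n" "i \<noteq> j"
  shows "P_at J e i (P_at J e j h) zs = P_at J e j (P_at J e i h) zs"
proof -
  have H: "(\<lambda>(y, y'). (cmod (h (zs[i := y, j := y'])))^2) summable_on UNIV"
    by (rule layer_l2_slice2[OF h zs ij])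
  have swap: "zs[j := y', i := y] = zs[i := y, j := y']" for y y'
    using ij by (simp add: list_update_swap)
  show ?thesis
    unfolding P_at_P_at_conv_inner[OF h zs ij] P_at_P_at_conv_inner[OF h zs ij(2,1) ij(3)[symmetric]]
    by (subst sum.swap) (simp add: swap l2_inner_iterated_swap[OF onf_l2 onf_l2 H] mult_ac)
qed

lemma layer_l2_PQ_at: "layer_l2 n h \<Longrightarrow> fst p < n \<Longrightarrow> layer_l2 n (PQ_at J e p h)"
  unfolding PQ_at_def using P_at_Q_at_pythagoras(1,2) by simp

lemma PQ_at_pythagoras: "layer_l2 n h \<Longrightarrow> c < n \<Longrightarrow> layer_normsq n h = layer_normsq n (PQ_at J e (c, True) h) + layer_normsq n (PQ_at J e (c, False) h)"
  unfolding PQ_at_def using P_at_Q_at_pythagoras(3) by simp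

lemma layer_l2_PQ_ops: "layer_l2 n h \<Longrightarrow> \<forall>p\<in>set ps. fst p < n \<Longrightarrow> layer_l2 n (PQ_ops J e ps h)"
  by (induction ps arbitrary: h) (auto simp: layer_l2_PQ_at)

lemma PQ_at_commute:
  assumes h: "layer_l2 n h" and zs: "length zs = n" and pq: "fst p < n" "fst q < n" "fst p \<noteq> fst q"
  shows "PQ_at J e p (PQ_at J e q h) zs = PQ_at J e q (PQ_at J e p h) zs"
proof -
  obtain i a where p: "p = (i, a)" by (cases p)
  obtain j b where q: "q = (j, b)" by (cases q)
  have ij: "i < n" "j < n" "i \<noteq> j" using pq by (auto simp: p q)
  have sl: "layer_l2 n g \<Longrightarrow> c < n \<Longrightarrow> l2 (\<lambda>y. g (zs[c := y]))" for g c
    by (rule layer_l2_slice) (auto simp: zs)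
  have lP: "layer_l2 n g \<Longrightarrow> c < n \<Longrightarrow> layer_l2 n (P_at J e c g)" for g c using P_at_Q_at_pythagoras(1) by blast
  have PQ: "P_at J e i (Q_at J e j h) zs = P_at J e i h zs - P_at J e i (P_at J e j h) zs"
    if "i < n" "j < n" "i \<noteq> j" for i j
    unfolding Q_at_def by (rule P_at_diff) (use sl lP h that in auto)
  have QP: "Q_at J e j (P_at J e i h) zs = P_at J e i h zs - P_at J e j (P_at J e i h) zs" for i j
    by (simp add: Q_at_def)
  have C: "P_at J e i (P_at J e j h) zs = P_at J e j (P_at J e i h) zs"
    by (rule P_at_commute[OF h zs ij])
  show ?thesis
  proof (cases a; cases b)
    assume "a" "b" then show ?thesis using C by (simp add: p q PQ_at_def)
  next
    assume "a" "\<not> b" then show ?thesis using C PQ[OF ij] QP by (simp add: p q PQ_at_def)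
  next
    assume "\<not> a" "b" then show ?thesis using C PQ[OF ij(2,1) ij(3)[symmetric]] QP by (simp add: p q PQ_at_def)
  next
    assume "\<not> a" "\<not> b"
    then show ?thesis using C PQ[OF ij] PQ[OF ij(2,1) ij(3)[symmetric]]
      by (simp add: p q PQ_at_def) (simp add: Q_at_def)
  qed
qed

lemma PQ_ops_PQ_at_commute:
  assumes "layer_l2 n h" "length zs = n" "fst p < n" "\<forall>q\<in>set ps. fst q < n \<and> fst q \<noteq> fst p"
  shows "PQ_ops J e ps (PQ_at J e p h) zs = PQ_at J e p (PQ_ops J e ps h) zs"
  using assms
proof (induction ps arbitrary: h zs)
  case Nil then show ?case by simp
next
  case (Cons q ps)
  have qn: "fst q < n" "fst q \<noteq> fst p" using Cons.prems by auto
  have "PQ_ops J e (q # ps) (PQ_at J e p h) zs = PQ_ops J e ps (PQ_at J e q (PQ_at J e p h)) zs" by simp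
  also have "\<dots> = PQ_ops J e ps (PQ_at J e p (PQ_at J e q h)) zs"
    by (rule PQ_ops_cong[where n=n]) (use Cons.prems qn in \<open>auto intro: PQ_at_commute\<close>)
  also have "\<dots> = PQ_at J e p (PQ_ops J e ps (PQ_at J e q h)) zs"
    by (rule Cons.IH) (use Cons.prems qn layer_l2_PQ_at in auto)
  finally show ?case by simp
qed

lemma PQ_ops_mset_eq:
  assumes "mset ps = mset ps'" "distinct (map fst ps)" "\<forall>p\<in>set ps. fst p < n" "layer_l2 n h" "length zs = n"
  shows "PQ_ops J e ps h zs = PQ_ops J e ps' h zs"
  using assms
proof (induction ps arbitrary: ps' h zs)
  case Nil then show ?case by simp
next
  case (Cons p ps)
  have "p \<in> set ps'" using Cons.prems(1) by (metis list.set_intros(1) set_mset_mset)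
  then obtain xs ys where ps': "ps' = xs @ p # ys" by (meson split_list)
  have m: "mset ps = mset (xs @ ys)" using Cons.prems(1) by (simp add: ps')
  have setxs: "set xs \<subseteq> set ps" using m by (metis Un_iff set_append set_mset_mset subsetI)
  have fxs: "\<forall>q\<in>set xs. fst q < n \<and> fst q \<noteq> fst p"
    using setxs Cons.prems(2,3) by (force simp: image_iff)
  have "PQ_ops J e ps' h zs = PQ_ops J e ys (PQ_at J e p (PQ_ops J e xs h)) zs" by (simp add: ps')
  also have "\<dots> = PQ_ops J e ys (PQ_ops J e xs (PQ_at J e p h)) zs"
  proof (rule PQ_ops_cong[where n=n])
    show "\<forall>q\<in>set ys. fst q < n"
      using m Cons.prems(3) by (metis Un_iff set_append set_mset_mset list.set_intros(2))
    show "length zs = n" by (rule Cons.prems(5))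
    fix zs' :: "int list" assume "length zs' = n"
    then show "PQ_at J e p (PQ_ops J e xs h) zs' = PQ_ops J e xs (PQ_at J e p h) zs'"
      using PQ_ops_PQ_at_commute[OF Cons.prems(4) _ _ fxs] Cons.prems(3) by simp
  qed
  also have "\<dots> = PQ_ops J e (xs @ ys) (PQ_at J e p h) zs" by simp
  also have "\<dots> = PQ_ops J e ps (PQ_at J e p h) zs"
    by (rule Cons.IH[symmetric]) (use m Cons.prems layer_l2_PQ_at in auto)
  finally show ?case by simp
qed

lemma sum_PQ_patterns_layer_normsq:
  assumes "layer_l2 n h" "\<forall>c\<in>set cs. c < n"
  shows "(\<Sum>bs\<in>{bs. length bs = length cs}. layer_normsq n (PQ_ops J e (zip cs bs) h)) = layer_normsq n h"
  using assms(2)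
proof (induction cs rule: rev_induct)
  case Nil then show ?case by simp
next
  case (snoc c cs)
  define A where "A = {bs :: bool list. length bs = length cs}"
  have fin: "finite A" unfolding A_def using finite_lists_length_eq[of "UNIV :: bool set"] by simp
  have eqset: "{bs. length bs = length (cs @ [c])} = (\<lambda>(bs, b). bs @ [b]) ` (A \<times> UNIV)"
  proof (rule set_eqI, rule iffI)
    fix bs :: "bool list" assume "bs \<in> {bs. length bs = length (cs @ [c])}"
    then have "bs = butlast bs @ [last bs]" "butlast bs \<in> A"
      by (auto simp: A_def intro!: append_butlast_last_id[symmetric])
    then show "bs \<in> (\<lambda>(bs, b). bs @ [b]) ` (A \<times> UNIV)" by force
  qed (auto simp: A_def)
  have inj: "inj_on (\<lambda>(bs, b). bs @ [b]) (A \<times> UNIV)" by (auto simp: inj_on_def)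
  have lo: "layer_l2 n (PQ_ops J e (zip cs bs) h)" if "bs \<in> A" for bs
    by (rule layer_l2_PQ_ops[OF assms(1)]) (use snoc.prems in \<open>auto dest: set_zip_leftD\<close>)
  have "(\<Sum>bs\<in>{bs. length bs = length (cs @ [c])}. layer_normsq n (PQ_ops J e (zip (cs @ [c]) bs) h))
      = (\<Sum>p\<in>A \<times> UNIV. layer_normsq n (PQ_ops J e (zip (cs @ [c]) ((\<lambda>(bs, b). bs @ [b]) p)) h))"
    unfolding eqset by (subst sum.reindex[OF inj]) (simp add: o_def)
  also have "\<dots> = (\<Sum>(bs,b)\<in>A \<times> UNIV. layer_normsq n (PQ_at J e (c, b) (PQ_ops J e (zip cs bs) h)))"
    by (rule sum.cong) (auto simp: A_def)
  also have "\<dots> = (\<Sum>bs\<in>A. \<Sum>b\<in>UNIV. layer_normsq n (PQ_at J e (c, b) (PQ_ops J e (zip cs bs) h)))"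
    by (rule sum.cartesian_product[symmetric])
  also have "\<dots> = (\<Sum>bs\<in>A. layer_normsq n (PQ_ops J e (zip cs bs) h))"
  proof (rule sum.cong[OF refl])
    fix bs assume "bs \<in> A"
    show "(\<Sum>b\<in>UNIV. layer_normsq n (PQ_at J e (c, b) (PQ_ops J e (zip cs bs) h))) = layer_normsq n (PQ_ops J e (zip cs bs) h)"
      using PQ_at_pythagoras[OF lo[OF \<open>bs \<in> A\<close>], of c] snoc.prems by (simp add: UNIV_bool add.commute)
  qed
  also have "\<dots> = layer_normsq n h" using snoc by (simp add: A_def)
  finally show ?case .
qed

lemma layer_normsq_PQ_pattern:
  assumes psi: "layer_l2 n \<psi>" and sym: "\<And>zs \<sigma>. length zs = n \<Longrightarrow> \<sigma> permutes {..<n} \<Longrightarrow> \<psi> (permute_list \<sigma> zs) = \<psi> zs"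
    and S: "S \<subseteq> {..<n}" "card S = k"
  shows "layer_normsq n (PQ_ops J e (PQ_pattern n S) \<psi>) = layer_normsq n (PQ_ops J e (PQ_block k n) \<psi>)"
proof -
  have kn: "k \<le> n" using card_mono[OF _ S(1)] S(2) by simp
  obtain \<tau> where tau: "\<tau> permutes {..<n}" "\<And>i. i < n \<Longrightarrow> \<tau> i < k \<longleftrightarrow> i \<in> S"
    using permutes_onto_initial_segment[OF S] by blast
  have cs: "\<forall>p\<in>set (PQ_pattern n S). fst p < n" by (auto simp: PQ_pattern_def dest: set_zip_leftD)
  have mp: "map (\<lambda>(c,b). (\<tau> c, b)) (PQ_pattern n S) = map (\<lambda>d. (d, d < k)) (map \<tau> [0..<n])"
    unfolding PQ_pattern_def by (auto simp: zip_map2 zip_same_conv_map tau(2) intro!: map_cong)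
  have dt: "distinct (map \<tau> [0..<n])"
    using permutes_inj_on[OF tau(1)] by (simp add: distinct_map lessThan_atLeast0)
  have st: "set (map \<tau> [0..<n]) = set [0..<n]"
    using permutes_image[OF tau(1)] by (simp add: lessThan_atLeast0)
  have mt: "mset (map \<tau> [0..<n]) = mset [0..<n]"
    using set_eq_iff_mset_eq_distinct[OF dt, of "[0..<n]"] st by (simp del: mset_map mset_upt)
  have mset_eq: "mset (map (\<lambda>(c,b). (\<tau> c, b)) (PQ_pattern n S)) = mset (PQ_block k n)"
    unfolding mp mset_PQ_block[OF kn] mset_map[of _ "map \<tau> [0..<n]"] mt by (simp add: mset_map)
  have dist: "distinct (map fst (map (\<lambda>(c,b). (\<tau> c, b)) (PQ_pattern n S)))"
    unfolding mp using dt by (simp add: o_def)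
  have cs2: "\<forall>p\<in>set (map (\<lambda>(c,b). (\<tau> c, b)) (PQ_pattern n S)). fst p < n"
    unfolding mp using st by auto
  have "layer_normsq n (PQ_ops J e (PQ_pattern n S) \<psi>) = layer_normsq n (\<lambda>z. PQ_ops J e (PQ_pattern n S) \<psi> (permute_list \<tau> z))"
    by (rule layer_normsq_permute_list[OF tau(1), symmetric])
  also have "\<dots> = layer_normsq n (PQ_ops J e (map (\<lambda>(c,b). (\<tau> c, b)) (PQ_pattern n S)) (\<lambda>z. \<psi> (permute_list \<tau> z)))"
    by (rule layer_normsq_cong) (rule PQ_ops_permute_list[OF tau(1) _ cs])
  also have "\<dots> = layer_normsq n (PQ_ops J e (map (\<lambda>(c,b). (\<tau> c, b)) (PQ_pattern n S)) \<psi>)"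
    by (rule layer_normsq_cong, rule PQ_ops_cong[where n=n]) (use sym tau(1) cs2 in auto)
  also have "\<dots> = layer_normsq n (PQ_ops J e (PQ_block k n) \<psi>)"
    by (rule layer_normsq_cong, rule PQ_ops_mset_eq[OF mset_eq dist cs2 psi])
  finally show ?thesis .
qed

text \<open>The \<open>2^n\<close> patterns of \<open>P\<close>'s and \<open>Q\<close>'s split \<open>\<psi>\<close> orthogonally, and by symmetry
  of \<open>\<psi>\<close> the \<open>n choose k\<close> patterns with \<open>k\<close> factors \<open>P\<close> have the same norm.\<close>

lemma binomial_layer_normsq_PQ_block_le:
  assumes psi: "layer_l2 n \<psi>" and sym: "\<And>zs \<sigma>. length zs = n \<Longrightarrow> \<sigma> permutes {..<n} \<Longrightarrow> \<psi> (permute_list \<sigma> zs) = \<psi> zs"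
    and kn: "k \<le> n"
  shows "real (n choose k) * layer_normsq n (PQ_ops J e (PQ_block k n) \<psi>) \<le> layer_normsq n \<psi>"
proof -
  define SS where "SS = {S. S \<subseteq> {..<n} \<and> card S = k}"
  define bl where "bl S = map (\<lambda>i. i \<in> S) [0..<n]" for S
  have cardSS: "card SS = n choose k" unfolding SS_def using n_subsets[of "{..<n}" k] by simp
  have finSS: "finite SS" unfolding SS_def by simp
  have inj: "inj_on bl SS"
  proof (rule inj_onI)
    fix S T assume S: "S \<in> SS" and T: "T \<in> SS" and eq: "bl S = bl T"
    have "\<forall>i<n. (i \<in> S) = (i \<in> T)"
    proof (intro allI impI)
      fix i assume "i < n"
      then show "(i \<in> S) = (i \<in> T)" using arg_cong[OF eq, of "\<lambda>l. l ! i"] by (simp add: bl_def)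
    qed
    then show "S = T" using S T unfolding SS_def by auto
  qed
  have "real (n choose k) * layer_normsq n (PQ_ops J e (PQ_block k n) \<psi>) = (\<Sum>S\<in>SS. layer_normsq n (PQ_ops J e (PQ_pattern n S) \<psi>))"
    using layer_normsq_PQ_pattern[OF psi sym] by (simp add: SS_def cardSS[symmetric])
  also have "\<dots> = (\<Sum>bs\<in>bl ` SS. layer_normsq n (PQ_ops J e (zip [0..<n] bs) \<psi>))"
    by (subst sum.reindex[OF inj]) (simp add: PQ_pattern_def bl_def)
  also have "\<dots> \<le> (\<Sum>bs\<in>{bs. length bs = length [0..<n]}. layer_normsq n (PQ_ops J e (zip [0..<n] bs) \<psi>))"
    by (rule sum_mono2) (use finite_lists_length_eq[of "UNIV :: bool set" n] in \<open>auto simp: bl_def layer_normsq_nonneg\<close>)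
  also have "\<dots> = layer_normsq n \<psi>"
    by (rule sum_PQ_patterns_layer_normsq[OF psi]) simp
  finally show ?thesis .
qed

text \<open>As \<open>vec_of J e w\<close> lies in the range of \<open>P\<close>, pairing with it in one particle
  variable does not see the projection \<open>P\<close> applied to that variable.\<close>

lemma infsum_cnj_tensor_P_at:
  assumes F: "layer_l2 k F" and c: "c < k"
  shows "(\<Sum>\<^sub>\<infinity>ys\<in>lists_of_length k. cnj_tensor (vec_of J e w) ys * F ys) = (\<Sum>\<^sub>\<infinity>ys\<in>lists_of_length k. cnj_tensor (vec_of J e w) ys * P_at J e c F ys)"
proof -
  define v where "v = vec_of J e w"
  have vl: "l2 v" unfolding v_def by (rule vec_of_l2)
  note bij = bij_betw_list_update[OF c]
  have PF: "layer_l2 k (P_at J e c F)" by (rule P_at_Q_at_pythagoras(1)[OF F c])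
  have s1: "(\<lambda>ys. cnj_tensor v ys * F ys) summable_on lists_of_length k" by (rule layer_l2_mult_summable[OF layer_l2_cnj_tensor[OF vl] F])
  have s2: "(\<lambda>ys. cnj_tensor v ys * P_at J e c F ys) summable_on lists_of_length k" by (rule layer_l2_mult_summable[OF layer_l2_cnj_tensor[OF vl] PF])
  have Rl: "zs \<in> lists_zero_at k c \<Longrightarrow> length zs = k" for zs by (simp add: lists_zero_at_def)
  have eq: "(\<Sum>\<^sub>\<infinity>y. cnj_tensor v (zs[c := y]) * F (zs[c := y])) = (\<Sum>\<^sub>\<infinity>y. cnj_tensor v (zs[c := y]) * P_at J e c F (zs[c := y]))"
    if zs: "zs \<in> lists_zero_at k c" for zs
  proof -
    define W where "W = cnj_tensor v (take c zs) * cnj_tensor v (drop (Suc c) zs)"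
    define sl where "sl = (\<lambda>t. F (zs[c := t]))"
    have lz: "length zs = k" using Rl[OF zs] .
    have sl2: "l2 sl" unfolding sl_def by (rule layer_l2_slice[OF F lz c])
    have "(\<Sum>\<^sub>\<infinity>y. cnj_tensor v (zs[c := y]) * F (zs[c := y])) = (\<Sum>\<^sub>\<infinity>y. W * (cnj (v y) * sl y))"
      using c lz by (simp add: cnj_tensor_list_update W_def sl_def mult_ac)
    also have "\<dots> = W * l2_inner v sl"
      by (subst infsum_cmult_right) (use l2_cnj_prod_summable[OF vl sl2] in \<open>simp_all add: l2_inner_def\<close>)
    also have "\<dots> = W * l2_inner v (proj J e sl)"
      unfolding v_def by (simp add: inner_vec_of_proj[OF sl2])
    also have "\<dots> = (\<Sum>\<^sub>\<infinity>y. W * (cnj (v y) * proj J e sl y))"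
      by (subst infsum_cmult_right) (use l2_cnj_prod_summable[OF vl proj_l2] in \<open>simp_all add: l2_inner_def\<close>)
    also have "\<dots> = (\<Sum>\<^sub>\<infinity>y. cnj_tensor v (zs[c := y]) * P_at J e c F (zs[c := y]))"
      using c lz by (simp add: cnj_tensor_list_update W_def sl_def mult_ac P_at_slice[OF lz c])
    finally show ?thesis .
  qed
  have "(\<Sum>\<^sub>\<infinity>ys\<in>lists_of_length k. cnj_tensor v ys * F ys) = (\<Sum>\<^sub>\<infinity>zs\<in>lists_zero_at k c. \<Sum>\<^sub>\<infinity>y. cnj_tensor v (zs[c := y]) * F (zs[c := y]))"
    using infsum_Sigma_bij(1)[OF bij s1] by simp
  also have "\<dots> = (\<Sum>\<^sub>\<infinity>zs\<in>lists_zero_at k c. \<Sum>\<^sub>\<infinity>y. cnj_tensor v (zs[c := y]) * P_at J e c F (zs[c := y]))"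
    by (rule infsum_cong) (rule eq)
  also have "\<dots> = (\<Sum>\<^sub>\<infinity>ys\<in>lists_of_length k. cnj_tensor v ys * P_at J e c F ys)"
    using infsum_Sigma_bij(1)[OF bij s2] by simp
  finally show ?thesis unfolding v_def .
qed

lemma infsum_cnj_tensor_P_ats:
  assumes F: "layer_l2 k F" and cs: "\<forall>c\<in>set cs. c < k"
  shows "(\<Sum>\<^sub>\<infinity>ys\<in>lists_of_length k. cnj_tensor (vec_of J e w) ys * F ys)
       = (\<Sum>\<^sub>\<infinity>ys\<in>lists_of_length k. cnj_tensor (vec_of J e w) ys * PQ_ops J e (map (\<lambda>c. (c, True)) cs) F ys)"
  using assms
proof (induction cs arbitrary: F)
  case Nil then show ?case by simp
next
  case (Cons c cs)
  have "(\<Sum>\<^sub>\<infinity>ys\<in>lists_of_length k. cnj_tensor (vec_of J e w) ys * F ys) = (\<Sum>\<^sub>\<infinity>ys\<in>lists_of_length k. cnj_tensor (vec_of J e w) ys * P_at J e c F ys)"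
    using infsum_cnj_tensor_P_at[OF Cons.prems(1)] Cons.prems(2) by simp
  also have "\<dots> = (\<Sum>\<^sub>\<infinity>ys\<in>lists_of_length k. cnj_tensor (vec_of J e w) ys * PQ_ops J e (map (\<lambda>c. (c, True)) cs) (P_at J e c F) ys)"
    by (rule Cons.IH) (use Cons.prems P_at_Q_at_pythagoras(1) in auto)
  finally show ?case by (simp add: PQ_at_def)
qed

section \<open>The coherent contraction\<close>

lemma coh_contract_term_bound:
  assumes psi: "layer_l2 (k + m) \<psi>" and xs: "length xs = m"
  shows "(cmod (\<Sum>\<^sub>\<infinity>ys\<in>{ys. length ys = k}. prod_list (map (\<lambda>y. cnj (vec_of J e w y)) ys) * Q_coords J e [k..<k + m] \<psi> (ys @ xs)))^2
     \<le> (l2_normsq (vec_of J e w))^k * (\<Sum>\<^sub>\<infinity>ys\<in>lists_of_length k. (cmod (PQ_ops J e (PQ_block k (k + m)) \<psi> (ys @ xs)))^2)"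
proof -
  define v where "v = vec_of J e w"
  have vl: "l2 v" unfolding v_def by (rule vec_of_l2)
  define Qs where "Qs = map (\<lambda>c. (c, False)) [k..<k + m]"
  define Ps where "Ps = map (\<lambda>c. (c, True)) [0..<k]"
  define G where "G = PQ_ops J e Qs \<psi>"
  have Gl: "layer_l2 (k + m) G" unfolding G_def Qs_def by (rule layer_l2_PQ_ops[OF psi]) auto
  define F where "F ys = G (ys @ xs)" for ys
  have Fl: "layer_l2 k F" unfolding F_def by (rule layer_l2_append[OF Gl xs])
  have Ol: "layer_l2 k (\<lambda>ys. PQ_ops J e (PQ_block k (k + m)) \<psi> (ys @ xs))"
    by (rule layer_l2_append[OF layer_l2_PQ_ops[OF psi] xs]) (auto simp: PQ_block_def)
  have "(\<Sum>\<^sub>\<infinity>ys\<in>{ys. length ys = k}. prod_list (map (\<lambda>y. cnj (vec_of J e w y)) ys) * Q_coords J e [k..<k + m] \<psi> (ys @ xs))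
      = (\<Sum>\<^sub>\<infinity>ys\<in>lists_of_length k. cnj_tensor v ys * F ys)"
    by (simp add: lists_of_length_def cnj_tensor_def v_def F_def G_def Qs_def Q_coords_conv_PQ_ops)
  also have "\<dots> = (\<Sum>\<^sub>\<infinity>ys\<in>lists_of_length k. cnj_tensor v ys * PQ_ops J e Ps F ys)"
    unfolding v_def Ps_def by (rule infsum_cnj_tensor_P_ats[OF Fl]) simp
  also have "\<dots> = (\<Sum>\<^sub>\<infinity>ys\<in>lists_of_length k. cnj_tensor v ys * PQ_ops J e (PQ_block k (k + m)) \<psi> (ys @ xs))"
  proof (rule infsum_cong)
    fix ys assume "ys \<in> lists_of_length k"
    then have "PQ_ops J e Ps F ys = PQ_ops J e Ps G (ys @ xs)"
      unfolding F_def by (intro PQ_ops_append_slice[symmetric]) (auto simp: Ps_def)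
    then show "cnj_tensor v ys * PQ_ops J e Ps F ys = cnj_tensor v ys * PQ_ops J e (PQ_block k (k + m)) \<psi> (ys @ xs)"
      by (simp add: G_def PQ_block_def Qs_def Ps_def)
  qed
  finally have eq: "(\<Sum>\<^sub>\<infinity>ys\<in>{ys. length ys = k}. prod_list (map (\<lambda>y. cnj (vec_of J e w y)) ys) * Q_coords J e [k..<k + m] \<psi> (ys @ xs))
      = (\<Sum>\<^sub>\<infinity>ys\<in>lists_of_length k. cnj_tensor v ys * PQ_ops J e (PQ_block k (k + m)) \<psi> (ys @ xs))" .
  show ?thesis unfolding eq
    using Cauchy_Schwarz_infsum[OF layer_l2_cnj_tensor[OF vl, unfolded layer_l2_def] Ol[unfolded layer_l2_def]] layer_normsq_cnj_tensor[OF vl]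
    unfolding layer_normsq_def v_def by simp
qed

lemma coh_contract_pointwise_le:
  assumes fv: "fock_vec \<psi>" and sec: "\<And>zs. length zs > K0 \<Longrightarrow> \<psi> zs = 0" and xs: "length xs = m"
  shows "(cmod (coh_contract J e w \<psi> xs))^2 \<le> real (Suc K0) * (\<Sum>k\<le>K0.
    exp (- l2_normsq (vec_of J e w)) / fact k * real ((k + m) choose k) * (l2_normsq (vec_of J e w))^k
    * (\<Sum>\<^sub>\<infinity>ys\<in>lists_of_length k. (cmod (PQ_ops J e (PQ_block k (k + m)) \<psi> (ys @ xs)))^2))"
proof -
  define N where "N = l2_normsq (vec_of J e w)"
  define a where "a k = complex_of_real (exp (- N / 2) / sqrt (fact k) * sqrt (real ((k + m) choose k)))" for k
  define T where "T k = (\<Sum>\<^sub>\<infinity>ys\<in>{ys. length ys = k}. prod_list (map (\<lambda>y. cnj (vec_of J e w y)) ys) * Q_coords J e [k..<k + length xs] \<psi> (ys @ xs))" for k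
  define S where "S k = (\<Sum>\<^sub>\<infinity>ys\<in>lists_of_length k. (cmod (PQ_ops J e (PQ_block k (k + m)) \<psi> (ys @ xs)))^2)" for k
  have asq: "(cmod (a k))^2 = exp (- N) / fact k * real ((k + m) choose k)" for k
  proof -
    have "(exp (- N / 2))^2 = exp (- N)" by (simp add: power2_eq_square exp_add[symmetric])
    moreover have "(cmod (a k))^2 = (exp (- N / 2) / sqrt (fact k) * sqrt (real ((k + m) choose k)))^2"
      unfolding a_def norm_of_real by simp
    ultimately show ?thesis by (simp add: power_mult_distrib power_divide)
  qed
  have vanish: "T k = 0" if "k > K0" for k
  proof -
    have "Q_coords J e [k..<k + length xs] \<psi> (ys @ xs) = 0" if "length ys = k" for ys
      unfolding Q_coords_conv_PQ_ops
      by (rule PQ_ops_vanishing[where n="k + m"]) (use that xs \<open>k > K0\<close> sec in auto)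
    then show ?thesis unfolding T_def by (intro infsum_0) simp
  qed
  have "coh_contract J e w \<psi> xs = (\<Sum>k. a k * T k)"
    unfolding coh_contract_def a_def T_def N_def using xs by simp
  also have "\<dots> = (\<Sum>k\<le>K0. a k * T k)"
    by (rule suminf_finite) (use vanish in auto)
  finally have "(cmod (coh_contract J e w \<psi> xs))^2 \<le> real (card {..K0}) * (\<Sum>k\<le>K0. (cmod (a k * T k))^2)"
    by (simp only: norm_sum_sq_le_card[of "{..K0}"] finite_atMost)
  also have "\<dots> \<le> real (Suc K0) * (\<Sum>k\<le>K0. exp (- N) / fact k * real ((k + m) choose k) * N^k * S k)"
  proof -
    have "(cmod (a k * T k))^2 \<le> exp (- N) / fact k * real ((k + m) choose k) * (N^k * S k)" for k
      unfolding norm_mult power_mult_distrib asq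
      by (rule mult_left_mono) (use coh_contract_term_bound[OF fock_vec_layer_l2[OF fv] xs] in
          \<open>simp_all add: T_def S_def N_def xs\<close>)
    then show ?thesis by (simp add: sum_mono mult_ac)
  qed
  finally show ?thesis unfolding N_def S_def .
qed

lemma coh_contract_layer_bound:
  assumes fv: "fock_vec \<psi>" and sec: "\<And>zs. length zs > K0 \<Longrightarrow> \<psi> zs = 0"
  shows "layer_l2 m (coh_contract J e w \<psi>)"
    and "layer_normsq m (coh_contract J e w \<psi>) \<le> real (Suc K0) *
           (\<Sum>k\<le>K0. exp (- l2_normsq (vec_of J e w)) * (l2_normsq (vec_of J e w))^k / fact k * layer_normsq (k + m) \<psi>)"
proof -
  define N where "N = l2_normsq (vec_of J e w)"
  have N0: "0 \<le> N" unfolding N_def by (rule l2_normsq_nonneg)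
  define c where "c k = exp (- N) / fact k * real ((k + m) choose k) * N^k" for k
  define F where "F k = PQ_ops J e (PQ_block k (k + m)) \<psi>" for k
  define B where "B xs = real (Suc K0) * (\<Sum>k\<le>K0. c k * (\<Sum>\<^sub>\<infinity>ys\<in>lists_of_length k. (cmod (F k (ys @ xs)))^2))" for xs
  have psin: "layer_l2 n \<psi>" for n by (rule fock_vec_layer_l2[OF fv])
  have pointwise: "(cmod (coh_contract J e w \<psi> xs))^2 \<le> B xs" if "length xs = m" for xs
    using coh_contract_pointwise_le[OF fv sec that] unfolding B_def c_def F_def N_def .
  have "layer_l2 (k + m) (F k)" for k
    unfolding F_def by (rule layer_l2_PQ_ops[OF psin]) (auto simp: PQ_block_def)
  then have hsB: "(B has_sum real (Suc K0) * (\<Sum>k\<le>K0. c k * layer_normsq (k + m) (F k))) (lists_of_length m)"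
    unfolding B_def by (intro has_sum_cmult_right has_sum_sum layer_normsq_append_has_sum) simp
  show l: "layer_l2 m (coh_contract J e w \<psi>)"
    unfolding layer_l2_def by (rule summable_on_comparison_test[OF has_sum_imp_summable[OF hsB]]) (use pointwise in auto)
  have "layer_normsq m (coh_contract J e w \<psi>) \<le> infsum B (lists_of_length m)"
    unfolding layer_normsq_def
    by (rule infsum_mono[OF l[unfolded layer_l2_def] has_sum_imp_summable[OF hsB]]) (use pointwise in auto)
  also have "\<dots> = real (Suc K0) * (\<Sum>k\<le>K0. c k * layer_normsq (k + m) (F k))" using infsumI[OF hsB] by simp
  also have "\<dots> \<le> real (Suc K0) * (\<Sum>k\<le>K0. exp (- N) * N^k / fact k * layer_normsq (k + m) \<psi>)"
  proof (rule mult_left_mono[OF sum_mono])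
    fix k
    have binomial: "real ((k + m) choose k) * layer_normsq (k + m) (F k) \<le> layer_normsq (k + m) \<psi>"
      unfolding F_def
      by (rule binomial_layer_normsq_PQ_block_le[OF psin]) (auto intro: fock_vec_permute_list[OF fv])
    have "c k * layer_normsq (k + m) (F k)
        = exp (- N) * N^k / fact k * (real ((k + m) choose k) * layer_normsq (k + m) (F k))"
      by (simp add: c_def)
    also have "\<dots> \<le> exp (- N) * N^k / fact k * layer_normsq (k + m) \<psi>"
      by (rule mult_left_mono[OF binomial]) (use N0 in simp)
    finally show "c k * layer_normsq (k + m) (F k) \<le> exp (- N) * N^k / fact k * layer_normsq (k + m) \<psi>" .
  qed simp
  finally show "layer_normsq m (coh_contract J e w \<psi>) \<le> real (Suc K0) *
           (\<Sum>k\<le>K0. exp (- l2_normsq (vec_of J e w)) * (l2_normsq (vec_of J e w))^k / fact k * layer_normsq (k + m) \<psi>)"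
    unfolding N_def .
qed

lemma fock_normsq_coh_contract_le:
  assumes fv: "fock_vec \<psi>" and n1: "fock_normsq \<psi> = 1" and sec: "\<And>zs. length zs > K0 \<Longrightarrow> \<psi> zs = 0"
  shows "fock_normsq (coh_contract J e w \<psi>) \<le> real (Suc K0) *
           (\<Sum>k\<le>K0. exp (- l2_normsq (vec_of J e w)) * (l2_normsq (vec_of J e w))^k / fact k)"
proof -
  define N where "N = l2_normsq (vec_of J e w)"
  have N0: "0 \<le> N" unfolding N_def by (rule l2_normsq_nonneg)
  define d where "d k = exp (- N) * N^k / fact k" for k
  have d0: "0 \<le> d k" for k unfolding d_def using N0 by simp
  have psum: "(\<lambda>zs. (cmod (\<psi> zs))^2) summable_on UNIV" using fv unfolding fock_vec_def by blast
  note lay = fock_normsq_layers[OF psum]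
  define s where "s k = (\<Sum>\<^sub>\<infinity>m. layer_normsq (k + m) \<psi>)" for k
  have s1: "s k \<le> 1" for k unfolding s_def using layer_normsq_shift(2)[OF lay(2), of k] lay(1) n1 by simp
  define L where "L m = real (Suc K0) * (\<Sum>k\<le>K0. d k * layer_normsq (k + m) \<psi>)" for m
  have hsL: "(L has_sum real (Suc K0) * (\<Sum>k\<le>K0. d k * s k)) UNIV"
    unfolding L_def s_def
    by (intro has_sum_cmult_right has_sum_sum)
       (use layer_normsq_shift(1)[OF lay(2)] in \<open>auto simp: summable_iff_has_sum_infsum\<close>)
  have cl: "layer_l2 m (coh_contract J e w \<psi>)" for m by (rule coh_contract_layer_bound(1)[OF fv sec])
  have cb: "layer_normsq m (coh_contract J e w \<psi>) \<le> L m" for m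
    using coh_contract_layer_bound(2)[OF fv sec, where m=m and w=w] unfolding L_def d_def N_def by simp
  have cs: "(\<lambda>m. layer_normsq m (coh_contract J e w \<psi>)) summable_on UNIV"
    by (rule summable_on_comparison_test[OF has_sum_imp_summable[OF hsL]]) (use cb layer_normsq_nonneg in auto)
  have csum: "(\<lambda>zs. (cmod (coh_contract J e w \<psi> zs))^2) summable_on UNIV"
    by (rule fock_summable_from_layers[OF cl cs])
  have "fock_normsq (coh_contract J e w \<psi>) = (\<Sum>\<^sub>\<infinity>m. layer_normsq m (coh_contract J e w \<psi>))"
    by (rule fock_normsq_layers(1)[OF csum])
  also have "\<dots> \<le> infsum L UNIV"
    by (rule infsum_mono[OF cs has_sum_imp_summable[OF hsL]]) (rule cb)
  also have "\<dots> = real (Suc K0) * (\<Sum>k\<le>K0. d k * s k)" using infsumI[OF hsL] by simp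
  also have "\<dots> \<le> real (Suc K0) * (\<Sum>k\<le>K0. d k)"
    by (intro mult_left_mono sum_mono) (use d0 s1 in \<open>auto intro: mult_left_le\<close>)
  finally show ?thesis unfolding d_def N_def .
qed

end

section \<open>Elementary estimates and Gaussian integrals\<close>

lemma exp_partial_sum_le:
  fixes x :: real
  assumes "0 \<le> x"
  shows "(\<Sum>k\<le>n. x^k / fact k) \<le> exp x"
proof -
  have "(\<Sum>k\<le>n. x^k / fact k) \<le> (\<Sum>k. x^k / fact k)"
    by (rule sum_le_suminf) (use summable_exp[of x] assms in \<open>auto simp: divide_inverse mult.commute\<close>)
  also have "\<dots> = exp x" by (simp add: exp_def field_simps)
  finally show ?thesis .
qed

lemma exp_partial_sum_le_tilted:
  fixes x l :: real
  assumes l: "0 < l" "l \<le> 1" and x: "0 \<le> x"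
  shows "(\<Sum>k\<le>K0. x^k / fact k) \<le> (1 / l)^K0 * exp (l * x)"
proof -
  have "(\<Sum>k\<le>K0. x^k / fact k) \<le> (\<Sum>k\<le>K0. (1 / l)^K0 * ((l * x)^k / fact k))"
  proof (rule sum_mono)
    fix k assume "k \<in> {..K0}"
    then have kk: "k \<le> K0" by simp
    have "1 \<le> (1 / l)^(K0 - k)" using l by (simp add: one_le_power)
    moreover have "(1 / l)^K0 * l^k = (1 / l)^(K0 - k)"
      using kk l by (simp add: power_diff field_simps power_divide)
    ultimately have "1 \<le> (1 / l)^K0 * l^k" by simp
    then have "x^k \<le> (1 / l)^K0 * l^k * x^k" using x by (simp add: mult_le_cancel_right1)
    then show "x^k / fact k \<le> (1 / l)^K0 * ((l * x)^k / fact k)"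
      by (simp add: divide_right_mono power_mult_distrib mult_ac)
  qed
  also have "\<dots> = (1 / l)^K0 * (\<Sum>k\<le>K0. (l * x)^k / fact k)" by (simp add: sum_distrib_left)
  also have "\<dots> \<le> (1 / l)^K0 * exp (l * x)"
    by (rule mult_left_mono[OF exp_partial_sum_le]) (use l x in simp_all)
  finally show ?thesis .
qed

lemma cube_le_exp:
  fixes x y :: real
  assumes y: "0 < y" and x: "0 \<le> x"
  shows "x^3 \<le> 6 / y^3 * exp (y * x)"
proof -
  have "(y * x)^3 / fact 3 \<le> (\<Sum>k\<le>3. (y * x)^k / fact k)"
    by (rule member_le_sum) (use x y in auto)
  also have "\<dots> \<le> exp (y * x)" by (rule exp_partial_sum_le) (use x y in simp)
  finally have "y^3 * x^3 \<le> 6 * exp (y * x)" by (simp add: fact_numeral power_mult_distrib)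
  then show ?thesis using y by (simp add: field_simps)
qed

lemma mult_le_octic_bound:
  fixes L g y :: real
  assumes L: "0 \<le> L" and g: "0 < g" and y: "0 \<le> y"
  shows "L * y \<le> g / 4 * y^8 + L + 4 * L^2 / g"
proof (cases "y \<le> 1")
  case True
  then have "L * y \<le> L" using L by (simp add: mult_left_le)
  moreover have "0 \<le> g / 4 * y^8 + 4 * L^2 / g" using g y by simp
  ultimately show ?thesis by linarith
next
  case False
  show ?thesis
  proof (cases "y^7 \<ge> 4 * L / g")
    case True
    then have "L \<le> g / 4 * y^7" using g by (simp add: field_simps)
    then have "L * y \<le> g / 4 * y^7 * y" using y by (rule mult_right_mono)
    also have "\<dots> = g / 4 * y^8" by (simp add: numeral_eq_Suc power_Suc2 mult_ac)
    moreover have "0 \<le> 4 * L^2 / g" using g by simp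
    ultimately show ?thesis using L by linarith
  next
    case False
    have "y \<le> y^7" using \<open>\<not> y \<le> 1\<close> by (simp add: self_le_power)
    then have "y \<le> 4 * L / g" using False by simp
    then have "L * y \<le> L * (4 * L / g)" using L by (rule mult_left_mono)
    also have "\<dots> = 4 * L^2 / g" by (simp add: power2_eq_square)
    moreover have "0 \<le> g / 4 * y^8" using g y by simp
    ultimately show ?thesis using L by linarith
  qed
qed

lemma affine_le_exp:
  fixes K2 g \<tau> :: real
  assumes "0 \<le> K2" "0 < g" "0 \<le> \<tau>"
  shows "K2 * \<tau> + 1 \<le> (1 + 4 * K2 / g) * exp (g / 4 * \<tau>)"
proof -
  have "K2 * \<tau> + 1 \<le> (1 + 4 * K2 / g) * (1 + g / 4 * \<tau>)"
    using assms by (simp add: field_simps)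
  also have "\<dots> \<le> (1 + 4 * K2 / g) * exp (g / 4 * \<tau>)"
    by (rule mult_left_mono) (use assms exp_ge_add_one_self[of "g / 4 * \<tau>"] in auto)
  finally show ?thesis .
qed

lemma density_mono:
  assumes h: "h \<in> borel_measurable M" and le: "\<And>x. x \<in> space M \<Longrightarrow> f x \<le> h x"
  shows "density M f \<le> density M h"
proof -
  have "emeasure (density M f) A \<le> emeasure (density M h) A" for A
  proof (cases "A \<in> sets M")
    case False
    then show ?thesis by (simp add: emeasure_notin_sets)
  next
    case True
    have ss: "sigma_sets (space M) (sets M) = sets M" by (rule sets.sigma_sets_eq)
    have "emeasure (density M f) A \<le> (\<integral>\<^sup>+ x. f x * indicator A x \<partial>M)"
      unfolding density_def emeasure_measure_of_conv ss by auto
    also have "\<dots> \<le> (\<integral>\<^sup>+ x. h x * indicator A x \<partial>M)"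
      by (rule nn_integral_mono) (auto simp: le mult_right_mono)
    also have "\<dots> = emeasure (density M h) A" by (rule emeasure_density[OF h True, symmetric])
    finally show ?thesis .
  qed
  then show ?thesis by (simp add: le_measure_iff le_fun_def)
qed

lemma nn_integral_density_le:
  assumes h: "h \<in> borel_measurable M" and g: "g \<in> borel_measurable M"
    and le: "\<And>x. x \<in> space M \<Longrightarrow> f x \<le> h x"
  shows "(\<integral>\<^sup>+ x. g x \<partial>density M f) \<le> (\<integral>\<^sup>+ x. h x * g x \<partial>M)"
proof -
  have "(\<integral>\<^sup>+ x. g x \<partial>density M f) \<le> (\<integral>\<^sup>+ x. g x \<partial>density M h)"
    by (rule nn_integral_mono_measure) (simp_all add: density_mono[OF h le])
  also have "\<dots> = (\<integral>\<^sup>+ x. h x * g x \<partial>M)" by (rule nn_integral_density[OF h g])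
  finally show ?thesis .
qed

lemma nn_integral_gaussian:
  assumes b: "b > 0"
  shows "(\<integral>\<^sup>+ x. ennreal (exp (- (b * x^2))) \<partial>lborel) = ennreal (sqrt (pi / b))"
proof -
  define \<sigma> where "\<sigma> = sqrt (1 / (2 * b))"
  have s2: "\<sigma>^2 = 1 / (2 * b)" unfolding \<sigma>_def using b by simp
  have eq: "exp (- (b * x^2)) = sqrt (pi / b) * normal_density 0 \<sigma> x" for x
  proof -
    have "2 * pi * \<sigma>^2 = pi / b" using s2 b by (simp add: field_simps)
    moreover have "-(x - 0)\<^sup>2 / (2 * \<sigma>\<^sup>2) = - (b * x\<^sup>2)"
    proof -
      have "2 * \<sigma>\<^sup>2 = 1 / b" using s2 b by (simp add: field_simps)
      then show ?thesis using b by simp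
    qed
    ultimately show ?thesis unfolding normal_density_def using b by simp
  qed
  have "(\<integral>\<^sup>+ x. ennreal (normal_density 0 \<sigma> x) \<partial>lborel) = ennreal 1"
    using b by (subst nn_integral_eq_integral[OF integrable_normal_density]) (auto simp: \<sigma>_def)
  then have "(\<integral>\<^sup>+ x. ennreal (sqrt (pi / b)) * ennreal (normal_density 0 \<sigma> x) \<partial>lborel) = ennreal (sqrt (pi / b))"
    by (subst nn_integral_cmult) auto
  moreover have "ennreal (sqrt (pi / b) * normal_density 0 \<sigma> x) = ennreal (sqrt (pi / b)) * ennreal (normal_density 0 \<sigma> x)" for x
    by (rule ennreal_mult) (use b in auto)
  ultimately show ?thesis unfolding eq by simp
qed

lemma nn_integral_gaussian_complex:
  assumes b: "b > 0"
  shows "(\<integral>\<^sup>+ z. ennreal (exp (- (b * (cmod z)^2))) \<partial>(lborel :: complex measure)) = ennreal (pi / b)"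
proof -
  define f where "f = (\<lambda>(_::complex) (t::real). ennreal (exp (- (b * t^2))))"
  have "(\<integral>\<^sup>+ z. (\<Prod>bb\<in>Basis. f bb (z \<bullet> bb)) \<partial>(lborel :: complex measure)) = (\<Prod>bb\<in>(Basis :: complex set). (\<integral>\<^sup>+ t. f bb t \<partial>lborel))"
    by (rule nn_integral_lborel_prod) (auto simp: f_def)
  moreover have "(\<Prod>bb\<in>Basis. f bb (z \<bullet> bb)) = ennreal (exp (- (b * (cmod z)^2)))" for z
  proof -
    have "(\<Prod>bb\<in>Basis. f bb (z \<bullet> bb)) = ennreal (exp (- (b * (Re z)^2))) * ennreal (exp (- (b * (Im z)^2)))"
      by (simp add: Basis_complex_def f_def inner_complex_def)
    also have "\<dots> = ennreal (exp (- (b * (cmod z)^2)))"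
      by (simp add: ennreal_mult[symmetric] exp_add[symmetric] cmod_power2 algebra_simps)
    finally show ?thesis .
  qed
  moreover have "(\<Prod>bb\<in>(Basis :: complex set). (\<integral>\<^sup>+ t. f bb t \<partial>lborel)) = ennreal (pi / b)"
  proof -
    have "(\<Prod>bb\<in>(Basis :: complex set). (\<integral>\<^sup>+ t. f bb t \<partial>lborel)) = ennreal (sqrt (pi / b)) * ennreal (sqrt (pi / b))"
      by (simp add: Basis_complex_def f_def nn_integral_gaussian[OF b])
    also have "\<dots> = ennreal (pi / b)" using b by (simp add: ennreal_mult[symmetric])
    finally show ?thesis .
  qed
  ultimately show ?thesis by simp
qed

lemma nn_integral_gaussian_PiM:
  assumes b: "b > 0"
  shows "(\<integral>\<^sup>+ u. (\<Prod>j\<in>{..<J}. ennreal (exp (- (b * (cmod (u j))^2)))) \<partial>PiM {..<J} (\<lambda>_. (lborel :: complex measure))) = ennreal ((pi / b)^J)"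
proof -
  interpret product_sigma_finite "\<lambda>_::nat. (lborel :: complex measure)"
    by unfold_locales
  have "(\<integral>\<^sup>+ u. (\<Prod>j\<in>{..<J}. ennreal (exp (- (b * (cmod (u j))^2)))) \<partial>PiM {..<J} (\<lambda>_. (lborel :: complex measure)))
      = (\<Prod>j\<in>{..<J}. (\<integral>\<^sup>+ z. ennreal (exp (- (b * (cmod z)^2))) \<partial>lborel))"
    by (rule product_nn_integral_prod[where f="\<lambda>_ z. ennreal (exp (- (b * (cmod z)^2)))"]) auto
  also have "\<dots> = ennreal ((pi / b)^J)" using b by (simp add: nn_integral_gaussian_complex prod_ennreal ennreal_power)
  finally show ?thesis .
qed

section \<open>States supported in a sector\<close>

definition perm_class_indicator :: "int list \<Rightarrow> int list \<Rightarrow> complex" where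
  "perm_class_indicator zs0 zs = (if mset zs = mset zs0 then 1 else 0)"

lemma fock_vec_perm_class_indicator: "fock_vec (perm_class_indicator zs0)"
  unfolding fock_vec_def
proof (intro conjI allI impI)
  fix xs ys :: "int list" assume "mset xs = mset ys"
  then show "perm_class_indicator zs0 xs = perm_class_indicator zs0 ys"
    by (simp add: perm_class_indicator_def)
next
  show "(\<lambda>xs. (cmod (perm_class_indicator zs0 xs))^2) summable_on UNIV"
    by (rule finite_nonzero_values_imp_summable_on, rule finite_subset[OF _ mset_eq_finite[of zs0]])
       (auto simp: perm_class_indicator_def split: if_splits)
qed

lemma sector_cut_perm_class_indicator:
  assumes "M < real (length zs0)"
  shows "sector_cut M (perm_class_indicator zs0) = (\<lambda>_. 0)"
  using assms by (auto simp: sector_cut_def perm_class_indicator_def fun_eq_iff dest: mset_eq_length)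

lemma fock_inner_perm_class_indicator:
  assumes "fock_vec \<psi>"
  shows "fock_inner \<psi> (perm_class_indicator zs0) = of_nat (card {zs. mset zs = mset zs0}) * cnj (\<psi> zs0)"
proof -
  define C where "C = {zs. mset zs = mset zs0}"
  have "fock_inner \<psi> (perm_class_indicator zs0) = (\<Sum>\<^sub>\<infinity>zs\<in>C. cnj (\<psi> zs) * perm_class_indicator zs0 zs)"
    unfolding fock_inner_def C_def by (rule infsum_cong_neutral) (auto simp: perm_class_indicator_def)
  also have "\<dots> = (\<Sum>\<^sub>\<infinity>zs\<in>C. cnj (\<psi> zs0))"
  proof (rule infsum_cong)
    fix zs assume "zs \<in> C"
    then have "\<psi> zs = \<psi> zs0" using assms unfolding fock_vec_def C_def by blast
    then show "cnj (\<psi> zs) * perm_class_indicator zs0 zs = cnj (\<psi> zs0)"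
      using \<open>zs \<in> C\<close> by (simp add: perm_class_indicator_def C_def)
  qed
  also have "\<dots> = of_nat (card C) * cnj (\<psi> zs0)"
    using mset_eq_finite[of zs0] by (simp add: C_def)
  finally show ?thesis by (simp add: C_def)
qed

lemma fock_vec_unit_norm_le:
  assumes "fock_vec \<psi>" "fock_normsq \<psi> = 1"
  shows "(cmod (\<psi> zs))^2 \<le> 1"
proof -
  have "(\<lambda>zs'. (cmod (\<psi> zs'))^2) summable_on UNIV" using assms(1) unfolding fock_vec_def by blast
  then have "(\<Sum>\<^sub>\<infinity>zs'\<in>{zs}. (cmod (\<psi> zs'))^2) \<le> (\<Sum>\<^sub>\<infinity>zs'. (cmod (\<psi> zs'))^2)"
    by (intro infsum_mono2) auto
  then show ?thesis using assms(2) unfolding fock_normsq_def by simp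
qed

text \<open>Testing the sector condition against the symmetrised indicator of a configuration
  \<open>zs0\<close> with more than \<open>M\<close> particles gives \<open>\<Sum>i. lam i * \<bar>psi i zs0\<bar>\<^sup>2 = 0\<close>.\<close>

lemma in_sector_vanishing:
  assumes sd: "state_decomp lam psi" and ins: "in_sector M lam psi" and lj: "lam j > 0"
    and long: "M < real (length zs0)"
  shows "psi j zs0 = 0"
proof -
  define c where "c = card {zs. mset zs = mset zs0}"
  have c: "c \<noteq> 0" using mset_eq_finite[of zs0] by (auto simp: c_def)
  define r where "r i = lam i * (cmod (psi i zs0))^2" for i
  have lam0: "0 \<le> lam i" and fv: "fock_vec (psi i)" and unit: "fock_normsq (psi i) = 1" for i
    using sd unfolding state_decomp_def by auto
  have r0: "0 \<le> r i" for i unfolding r_def using lam0 by simp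
  have rsum: "summable r"
  proof (rule summable_comparison_test[where g=lam])
    show "\<exists>N. \<forall>n\<ge>N. norm (r n) \<le> lam n"
      using r0 lam0 fock_vec_unit_norm_le[OF fv unit] unfolding r_def by (auto intro!: mult_left_le)
    show "summable lam" using sd unfolding state_decomp_def by (auto intro: sums_summable)
  qed
  have terms: "complex_of_real (lam i) * fock_inner (psi i) (perm_class_indicator zs0) * psi i zs0
      = of_nat c * of_real (r i)" for i
    by (simp add: fock_inner_perm_class_indicator[OF fv] r_def c_def complex_norm_square mult_ac del: of_real_power)
  have "state_op lam psi (perm_class_indicator zs0) zs0 = of_nat c * of_real (suminf r)"
    unfolding state_op_def terms
    by (simp add: suminf_mult summable_complex_of_real rsum suminf_of_real)
  moreover have "state_op lam psi (perm_class_indicator zs0)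
      = sector_cut M (state_op lam psi (sector_cut M (perm_class_indicator zs0)))"
    using ins fock_vec_perm_class_indicator unfolding in_sector_def by blast
  then have "state_op lam psi (perm_class_indicator zs0) = (\<lambda>_. 0)"
    by (simp only: sector_cut_perm_class_indicator[OF long]) (simp add: state_op_def fock_inner_def sector_cut_def)
  ultimately have "suminf r = 0" using c by simp
  then have "r j = 0" using suminf_eq_zero_iff[OF rsum r0] by blast
  then show ?thesis using lj unfolding r_def by simp
qed

lemma loc_coherent_le_Poisson_tail:
  assumes sd: "state_decomp lam psi" and ins: "in_sector M lam psi" and onf: "orthonormal_fam J e"
  shows "loc_coherent lam psi J e w \<le> real (Suc (nat \<lfloor>M\<rfloor>)) *
           (\<Sum>k\<le>nat \<lfloor>M\<rfloor>. exp (- l2_normsq (vec_of J e w)) * (l2_normsq (vec_of J e w))^k / fact k)"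
proof -
  define K0 where "K0 = nat \<lfloor>M\<rfloor>"
  define B where "B = real (Suc K0) * (\<Sum>k\<le>K0. exp (- l2_normsq (vec_of J e w)) * (l2_normsq (vec_of J e w))^k / fact k)"
  define X where "X i = fock_normsq (coh_contract J e w (psi i))" for i
  have lam0: "0 \<le> lam i" for i using sd unfolding state_decomp_def by simp
  have lsum: "lam sums 1" using sd unfolding state_decomp_def by simp
  have X0: "0 \<le> X i" for i unfolding X_def fock_normsq_def by (rule infsum_nonneg) simp
  have XB: "lam i * X i \<le> lam i * B" for i
  proof (cases "lam i = 0")
    case True then show ?thesis by simp
  next
    case False
    then have li: "lam i > 0" using lam0[of i] by simp
    have sec: "length zs > K0 \<Longrightarrow> psi i zs = 0" for zs
    proof -
      assume "length zs > K0"
      then have "real (length zs) > M" unfolding K0_def by linarith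
      then show ?thesis by (rule in_sector_vanishing[OF sd ins li])
    qed
    have "X i \<le> B" unfolding X_def B_def
      by (rule fock_normsq_coh_contract_le[OF onf]) (use sd sec in \<open>auto simp: state_decomp_def\<close>)
    then show ?thesis by (rule mult_left_mono) (rule lam0)
  qed
  have sB: "summable (\<lambda>i. lam i * B)" using lsum by (intro summable_mult2) (simp add: sums_summable)
  have sX: "summable (\<lambda>i. lam i * X i)"
    by (rule summable_comparison_test[OF _ sB]) (use XB lam0 X0 in auto)
  have "loc_coherent lam psi J e w = (\<Sum>i. lam i * X i)" unfolding loc_coherent_def X_def ..
  also have "\<dots> \<le> (\<Sum>i. lam i * B)" by (rule suminf_le[OF XB sX sB])
  also have "\<dots> = B" using sums_unique[OF sums_mult2[OF lsum, of B]] by simp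
  finally show ?thesis unfolding B_def K0_def .
qed

lemma poisson_lower_tail_le:
  fixes M N lam0 :: real
  assumes M: "0 \<le> M" and N: "0 \<le> N" and l: "0 < lam0" "lam0 \<le> 1"
  shows "real (Suc (nat \<lfloor>M\<rfloor>)) * (\<Sum>k\<le>nat \<lfloor>M\<rfloor>. exp (- N) * N^k / fact k)
    \<le> (M + 1) * exp (M * ln (1 / lam0)) * exp (- ((1 - lam0) * N))"
proof -
  define K0 where "K0 = nat \<lfloor>M\<rfloor>"
  have K0: "real K0 \<le> M" unfolding K0_def using M by linarith
  have "(1 / lam0)^K0 = exp (real K0 * ln (1 / lam0))"
    using l by (simp add: exp_of_nat_mult)
  also have "\<dots> \<le> exp (M * ln (1 / lam0))"
    using mult_right_mono[OF K0, of "ln (1 / lam0)"] l by simp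
  finally have tilt: "(1 / lam0)^K0 \<le> exp (M * ln (1 / lam0))" .
  have "real (Suc K0) * (\<Sum>k\<le>K0. exp (- N) * N^k / fact k) = real (Suc K0) * (exp (- N) * (\<Sum>k\<le>K0. N^k / fact k))"
    by (simp add: sum_distrib_left)
  also have "\<dots> \<le> (M + 1) * (exp (- N) * ((1 / lam0)^K0 * exp (lam0 * N)))"
    using K0 M N l by (intro mult_mono mult_left_mono exp_partial_sum_le_tilted) (simp_all add: sum_nonneg)
  also have "\<dots> \<le> (M + 1) * (exp (- N) * (exp (M * ln (1 / lam0)) * exp (lam0 * N)))"
    using M by (intro mult_left_mono mult_right_mono tilt) simp_all
  also have "\<dots> = (M + 1) * exp (M * ln (1 / lam0)) * exp (- ((1 - lam0) * N))"
    by (simp add: mult_exp_exp algebra_simps)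
  finally show ?thesis unfolding K0_def .
qed

lemma loc_coherent_rescaled_le:
  fixes \<tau> K2 lam0 :: real
  assumes \<tau>: "1 \<le> \<tau>" and K2: "0 < K2" and l: "0 < lam0" "lam0 \<le> 1"
    and sd: "state_decomp lam psi" and ins: "in_sector (K2 * \<tau>) lam psi" and onf: "orthonormal_fam J e"
  shows "loc_coherent lam psi J e (\<lambda>j. u j / complex_of_real (sqrt (1 / \<tau>)))
     \<le> (K2 * \<tau> + 1) * exp (K2 * \<tau> * ln (1 / lam0)) * exp (- ((1 - lam0) * \<tau> * (\<Sum>j<J. (cmod (u j))^2)))"
proof -
  define w where "w = (\<lambda>j. u j / complex_of_real (sqrt (1 / \<tau>)))"
  have "(cmod (w j))^2 = \<tau> * (cmod (u j))^2" for j
    using \<tau> by (simp add: w_def norm_divide power_divide real_sqrt_divide norm_mult power_mult_distrib)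
  then have N: "l2_normsq (vec_of J e w) = \<tau> * (\<Sum>j<J. (cmod (u j))^2)"
    unfolding normsq_vec_of[OF onf] by (simp add: sum_distrib_left)
  have "loc_coherent lam psi J e w \<le> real (Suc (nat \<lfloor>K2 * \<tau>\<rfloor>)) *
      (\<Sum>k\<le>nat \<lfloor>K2 * \<tau>\<rfloor>. exp (- l2_normsq (vec_of J e w)) * (l2_normsq (vec_of J e w))^k / fact k)"
    by (rule loc_coherent_le_Poisson_tail[OF sd ins onf])
  also have "\<dots> \<le> (K2 * \<tau> + 1) * exp (K2 * \<tau> * ln (1 / lam0)) * exp (- ((1 - lam0) * l2_normsq (vec_of J e w)))"
    using K2 \<tau> l by (intro poisson_lower_tail_le l2_normsq_nonneg) simp_all
  finally show ?thesis unfolding N by (simp add: w_def mult.assoc)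
qed

section \<open>Exponential decay of the tail moment\<close>

lemma normsq_proj_vec_of:
  assumes "orthonormal_fam J e"
  shows "l2_normsq (proj J e (vec_of J e u)) = (\<Sum>j<J. (cmod (u j))^2)"
  using assms by (simp add: proj_vec_of normsq_vec_of)

lemma nn_integral_lower_symbol_le:
  fixes \<tau> K2 lam0 :: real
  assumes \<tau>: "1 \<le> \<tau>" and K2: "0 < K2" and l: "0 < lam0" "lam0 \<le> 1"
    and sd: "state_decomp lam psi" and ins: "in_sector (K2 * \<tau>) lam psi" and onf: "orthonormal_fam J e"
    and G: "G \<in> borel_measurable (PiM {..<J} (\<lambda>_. (lborel :: complex measure)))"
  shows "(\<integral>\<^sup>+ u. G u \<partial>lower_symbol lam psi J e (1 / \<tau>))
    \<le> (\<integral>\<^sup>+ u. ennreal ((\<tau> / pi)^J * ((K2 * \<tau> + 1) * exp (K2 * \<tau> * ln (1 / lam0)))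
          * exp (- ((1 - lam0) * \<tau> * (\<Sum>j<J. (cmod (u j))^2)))) * G u
        \<partial>PiM {..<J} (\<lambda>_. (lborel :: complex measure)))"
  unfolding lower_symbol_def
proof (rule nn_integral_density_le[OF _ G])
  show "(\<lambda>u. ennreal ((\<tau> / pi)^J * ((K2 * \<tau> + 1) * exp (K2 * \<tau> * ln (1 / lam0)))
          * exp (- ((1 - lam0) * \<tau> * (\<Sum>j<J. (cmod (u j))^2)))))
        \<in> borel_measurable (PiM {..<J} (\<lambda>_. (lborel :: complex measure)))"
    by measurable
  fix u
  have "inverse ((1 / \<tau> * pi) ^ J) = (\<tau> / pi)^J" by (simp add: power_divide field_simps)
  then show "ennreal (inverse ((1 / \<tau> * pi) ^ J) * loc_coherent lam psi J e (\<lambda>j. u j / complex_of_real (sqrt (1 / \<tau>))))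
      \<le> ennreal ((\<tau> / pi)^J * ((K2 * \<tau> + 1) * exp (K2 * \<tau> * ln (1 / lam0)))
          * exp (- ((1 - lam0) * \<tau> * (\<Sum>j<J. (cmod (u j))^2))))"
    using loc_coherent_rescaled_le[OF \<tau> K2 l sd ins onf, of u] \<tau>
    by (intro ennreal_leI) (simp add: mult.assoc mult_left_mono)
qed

lemma exp_times_cube_le:
  fixes b s R x :: real
  assumes b: "0 < b" and s: "0 \<le> s" and x: "0 \<le> x" "R < x"
  shows "exp (- ((s + 2 * b) * x)) * x^3 \<le> 6 / b^3 * exp (- (s * R)) * exp (- (b * x))"
proof -
  have "exp (- ((s + 2 * b) * x)) * x^3 = exp (- (s * x)) * exp (- (2 * b * x)) * x^3"
    by (simp add: mult_exp_exp algebra_simps)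
  also have "\<dots> \<le> exp (- (s * R)) * exp (- (2 * b * x)) * (6 / b^3 * exp (b * x))"
    using s x by (intro mult_mono cube_le_exp[OF b x(1)]) (auto intro: mult_left_mono)
  also have "\<dots> = 6 / b^3 * exp (- (s * R)) * exp (- (b * x))"
    by (simp add: mult_exp_exp algebra_simps)
  finally show ?thesis .
qed

lemma gaussian_weight_tail_cube_le:
  fixes A b s R :: real and J :: nat and u :: "nat \<Rightarrow> complex"
  defines "x \<equiv> \<Sum>j<J. (cmod (u j))^2"
  assumes b: "0 < b" and s: "0 \<le> s" and A: "0 \<le> A"
  shows "ennreal (A * exp (- ((s + 2 * b) * x))) * ennreal (if R < x then x^3 else 0)
    \<le> ennreal (A * (6 / b^3 * exp (- (s * R)))) * (\<Prod>j<J. ennreal (exp (- (b * (cmod (u j))^2))))"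
proof (cases "R < x")
  case True
  have x: "0 \<le> x" unfolding x_def by (simp add: sum_nonneg)
  have "A * (exp (- ((s + 2 * b) * x)) * x^3) \<le> A * (6 / b^3 * exp (- (s * R)) * exp (- (b * x)))"
    using A by (rule mult_left_mono[OF exp_times_cube_le[OF b s x True]])
  also have "\<dots> = A * (6 / b^3 * exp (- (s * R))) * (\<Prod>j<J. exp (- (b * (cmod (u j))^2)))"
    by (simp add: x_def sum_distrib_left exp_sum sum_negf[symmetric])
  finally show ?thesis
    using True A b x by (simp add: ennreal_mult[symmetric] prod_ennreal prod_nonneg ennreal_leI mult.assoc)
qed simp

lemma nn_integral_lower_symbol_tail_cube_le:
  fixes \<tau> K2 R lam0 \<delta> t :: real
  assumes \<tau>: "1 \<le> \<tau>" and K2: "0 < K2" and l: "0 < lam0" "lam0 \<le> 1" and \<delta>: "0 < \<delta>" and t: "0 \<le> t"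
    and split: "1 - lam0 = t + 2 * \<delta>"
    and sd: "state_decomp lam psi" and ins: "in_sector (K2 * \<tau>) lam psi" and onf: "orthonormal_fam J e"
  shows "(\<integral>\<^sup>+ u. ennreal (if R < (\<Sum>j<J. (cmod (u j))^2) then (\<Sum>j<J. (cmod (u j))^2)^3 else 0)
             \<partial>lower_symbol lam psi J e (1 / \<tau>))
     \<le> ennreal ((\<tau> / pi)^J * ((K2 * \<tau> + 1) * exp (K2 * \<tau> * ln (1 / lam0)))
          * (6 / (\<delta> * \<tau>)^3 * exp (- (t * \<tau> * R)))) * ennreal ((pi / (\<delta> * \<tau>))^J)"
proof -
  define M where "M = PiM {..<J} (\<lambda>_. (lborel :: complex measure))"
  define x where "x u = (\<Sum>j<J. (cmod (u j))^2)" for u :: "nat \<Rightarrow> complex"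
  define A where "A = (\<tau> / pi)^J * ((K2 * \<tau> + 1) * exp (K2 * \<tau> * ln (1 / lam0)))"
  define b where "b = \<delta> * \<tau>"
  have A0: "0 \<le> A" unfolding A_def using K2 \<tau> by simp
  have b0: "0 < b" unfolding b_def using \<delta> \<tau> by simp
  have rate: "(1 - lam0) * \<tau> = t * \<tau> + 2 * b" by (simp add: split b_def algebra_simps)
  have "(\<integral>\<^sup>+ u. ennreal (if R < x u then (x u)^3 else 0) \<partial>lower_symbol lam psi J e (1 / \<tau>))
      \<le> (\<integral>\<^sup>+ u. ennreal (A * exp (- ((1 - lam0) * \<tau> * x u))) * ennreal (if R < x u then (x u)^3 else 0) \<partial>M)"
    using nn_integral_lower_symbol_le[OF \<tau> K2 l sd ins onf] unfolding M_def A_def x_def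
    by (simp add: mult.assoc)
  also have "\<dots> \<le> (\<integral>\<^sup>+ u. ennreal (A * (6 / b^3 * exp (- (t * \<tau> * R))))
      * (\<Prod>j<J. ennreal (exp (- (b * (cmod (u j))^2)))) \<partial>M)"
    using gaussian_weight_tail_cube_le[OF b0 _ A0, where s = "t * \<tau>" and J = J and R = R] t \<tau>
    unfolding rate x_def by (intro nn_integral_mono) (simp add: mult.assoc)
  also have "\<dots> = ennreal (A * (6 / b^3 * exp (- (t * \<tau> * R)))) * ennreal ((pi / b)^J)"
    by (subst nn_integral_cmult) (simp_all add: M_def nn_integral_gaussian_PiM[OF b0])
  finally show ?thesis unfolding A_def b_def x_def .
qed

lemma lower_symbol_tail_moment_le:
  fixes \<tau> K2 R lam0 \<delta> t :: real
  assumes \<tau>: "1 \<le> \<tau>" and K2: "0 < K2" and l: "0 < lam0" "lam0 \<le> 1" and \<delta>: "0 < \<delta>" and t: "0 \<le> t"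
    and split: "1 - lam0 = t + 2 * \<delta>"
    and sd: "state_decomp lam psi" and ins: "in_sector (K2 * \<tau>) lam psi" and onf: "orthonormal_fam J e"
  shows "(\<integral>\<^sup>+ u. indicator {u. l2_normsq (proj J e (vec_of J e u)) > R} u
                * ennreal ((l2_normsq (proj J e (vec_of J e u))) ^ 3)
             \<partial>lower_symbol lam psi J e (1 / \<tau>))
     \<le> ennreal ((K2 * \<tau> + 1) * exp (K2 * \<tau> * ln (1 / lam0) - t * \<tau> * R) * (6 / (\<delta> * \<tau>)^3) * (1 / \<delta>)^J)"
proof -
  have integrand: "(\<lambda>u. indicator {u. l2_normsq (proj J e (vec_of J e u)) > R} u
                * ennreal ((l2_normsq (proj J e (vec_of J e u))) ^ 3))
      = (\<lambda>u. ennreal (if R < (\<Sum>j<J. (cmod (u j))^2) then (\<Sum>j<J. (cmod (u j))^2)^3 else 0))"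
    by (rule ext) (simp add: normsq_proj_vec_of[OF onf] indicator_def)
  have volume: "(\<tau> / pi)^J * (pi / (\<delta> * \<tau>))^J = (1 / \<delta>)^J"
    unfolding power_mult_distrib[symmetric] using \<tau> \<delta> by (simp add: field_simps)
  have exponent: "exp (K2 * \<tau> * ln (1 / lam0)) * exp (- (t * \<tau> * R)) = exp (K2 * \<tau> * ln (1 / lam0) - t * \<tau> * R)"
    by (simp add: mult_exp_exp)
  have "(\<tau> / pi)^J * ((K2 * \<tau> + 1) * exp (K2 * \<tau> * ln (1 / lam0))) * (6 / (\<delta> * \<tau>)^3 * exp (- (t * \<tau> * R)))
      * (pi / (\<delta> * \<tau>))^J
    = (K2 * \<tau> + 1) * (exp (K2 * \<tau> * ln (1 / lam0)) * exp (- (t * \<tau> * R))) * (6 / (\<delta> * \<tau>)^3)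
      * ((\<tau> / pi)^J * (pi / (\<delta> * \<tau>))^J)"
    by (simp only: mult_ac)
  also have "\<dots> = (K2 * \<tau> + 1) * exp (K2 * \<tau> * ln (1 / lam0) - t * \<tau> * R) * (6 / (\<delta> * \<tau>)^3) * (1 / \<delta>)^J"
    by (simp only: volume exponent)
  finally have "ennreal ((\<tau> / pi)^J * ((K2 * \<tau> + 1) * exp (K2 * \<tau> * ln (1 / lam0)))
          * (6 / (\<delta> * \<tau>)^3 * exp (- (t * \<tau> * R)))) * ennreal ((pi / (\<delta> * \<tau>))^J)
      = ennreal ((K2 * \<tau> + 1) * exp (K2 * \<tau> * ln (1 / lam0) - t * \<tau> * R) * (6 / (\<delta> * \<tau>)^3) * (1 / \<delta>)^J)"
    using K2 \<tau> \<delta> by (simp add: ennreal_mult[symmetric])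
  with nn_integral_lower_symbol_tail_cube_le[OF assms] show ?thesis
    unfolding integrand by (rule ord_le_eq_trans)
qed

text \<open>The Cramer rate function of the Poisson law at \<open>k\<close> below its mean \<open>R\<close>: a Poisson
  variable of mean \<open>R \<tau>\<close> is at most \<open>k \<tau>\<close> with probability \<open>exp (- \<tau> poisson_rate R k + o(\<tau>))\<close>.\<close>

definition poisson_rate :: "real \<Rightarrow> real \<Rightarrow> real" where
  "poisson_rate R k = R - k - k * ln (R / k)"

lemma poisson_rate_pos:
  assumes "0 < k" "k < R"
  shows "0 < poisson_rate R k"
proof -
  have "ln (1 + (R / k - 1)) < R / k - 1"
    using assms by (intro ln_add_one_self_less_self) (simp add: field_simps)
  then have "k * ln (R / k) < k * (R / k - 1)" using assms(1) by simp
  also have "\<dots> = R - k" using assms(1) by (simp add: field_simps)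
  finally show ?thesis unfolding poisson_rate_def by simp
qed

lemma poisson_rate_le:
  assumes "0 < k" "k < R"
  shows "poisson_rate R k \<le> R - k"
  unfolding poisson_rate_def using assms by simp

lemma power_le_exp_of_root8:
  fixes a g \<tau> :: real
  assumes a: "1 \<le> a" and g: "0 < g" and \<tau>: "0 < \<tau>" and J: "real J \<le> \<tau> powr (1/8)"
  shows "a ^ J \<le> exp (ln a + 4 * (ln a)^2 / g) * exp (g / 4 * \<tau>)"
proof -
  define y where "y = \<tau> powr (1/8)"
  have y8: "y^8 = \<tau>" unfolding y_def using \<tau> by (simp add: powr_power)
  have L0: "0 \<le> ln a" using a by simp
  have "a ^ J = exp (real J * ln a)" using a by (simp add: exp_of_nat_mult)
  also have "\<dots> \<le> exp (y * ln a)"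
    using mult_right_mono[OF J L0] unfolding y_def by simp
  also have "\<dots> \<le> exp (g / 4 * y^8 + ln a + 4 * (ln a)^2 / g)"
    using mult_le_octic_bound[OF L0 g, of y] by (simp add: y_def mult.commute)
  also have "\<dots> = exp (ln a + 4 * (ln a)^2 / g) * exp (g / 4 * \<tau>)"
    by (simp add: y8 mult_exp_exp algebra_simps)
  finally show ?thesis .
qed

lemma tail_prefactor_le:
  fixes K2 g \<delta> \<tau> :: real
  assumes K2: "0 < K2" and g: "0 < g" and \<delta>: "0 < \<delta>" "\<delta> \<le> 1" and \<tau>: "1 \<le> \<tau>"
    and J: "real J \<le> \<tau> powr (1/8)"
  shows "(K2 * \<tau> + 1) * exp (- (3 / 4 * g * \<tau>)) * (6 / (\<delta> * \<tau>)^3) * (1 / \<delta>)^J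
    \<le> 6 / \<delta>^3 * (1 + 4 * K2 / g) * exp (ln (1 / \<delta>) + 4 * (ln (1 / \<delta>))^2 / g) * exp (- (g / 4) * \<tau>)"
proof -
  have a3: "6 / (\<delta> * \<tau>)^3 \<le> 6 / \<delta>^3"
    using \<tau> \<delta> by (intro divide_left_mono power_mono) (simp_all add: mult_le_cancel_left1)
  have "(K2 * \<tau> + 1) * exp (- (3 / 4 * g * \<tau>)) * (6 / (\<delta> * \<tau>)^3) * (1 / \<delta>)^J
      \<le> ((1 + 4 * K2 / g) * exp (g / 4 * \<tau>)) * exp (- (3 / 4 * g * \<tau>)) * (6 / \<delta>^3)
        * (exp (ln (1 / \<delta>) + 4 * (ln (1 / \<delta>))^2 / g) * exp (g / 4 * \<tau>))"
    using K2 g \<delta> \<tau>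
    by (intro mult_mono a3 affine_le_exp power_le_exp_of_root8 J) simp_all
  also have "\<dots> = 6 / \<delta>^3 * (1 + 4 * K2 / g) * exp (ln (1 / \<delta>) + 4 * (ln (1 / \<delta>))^2 / g)
      * (exp (g / 4 * \<tau>) * exp (- (3 / 4 * g * \<tau>)) * exp (g / 4 * \<tau>))"
    by (simp only: mult_ac)
  also have "exp (g / 4 * \<tau>) * exp (- (3 / 4 * g * \<tau>)) * exp (g / 4 * \<tau>) = exp (- (g / 4) * \<tau>)"
    by (simp add: mult_exp_exp algebra_simps)
  finally show ?thesis .
qed

text \<open>The tilt \<open>K2 / R\<close> is optimal for the Poisson tail beyond \<open>R\<close>; the margin \<open>2 \<delta>\<close> left
  in the Gaussian pays for the cubic weight and the volume factor, at the cost of a quarter of the rate.\<close>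

lemma poisson_tilt:
  fixes K2 R :: real
  defines "\<delta> \<equiv> poisson_rate R K2 / (8 * R)"
  assumes K2: "0 < K2" and RK: "K2 < R"
  shows "0 < \<delta>" and "\<delta> \<le> 1" and "0 \<le> 1 - K2 / R - 2 * \<delta>"
    and "K2 * \<tau> * ln (1 / (K2 / R)) - (1 - K2 / R - 2 * \<delta>) * \<tau> * R = - (3 / 4 * poisson_rate R K2 * \<tau>)"
proof -
  have g: "0 < poisson_rate R K2" "poisson_rate R K2 \<le> R - K2"
    using poisson_rate_pos[OF K2 RK] poisson_rate_le[OF K2 RK] by auto
  have R: "0 < R" using K2 RK by simp
  show "0 < \<delta>" "\<delta> \<le> 1" unfolding \<delta>_def using g K2 R by (simp_all add: field_simps)
  have tR: "(1 - K2 / R - 2 * \<delta>) * R = R - K2 - poisson_rate R K2 / 4"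
    unfolding \<delta>_def using R by (simp add: field_simps)
  then have "0 \<le> (1 - K2 / R - 2 * \<delta>) * R" using g RK by linarith
  then show "0 \<le> 1 - K2 / R - 2 * \<delta>" using R by (simp add: zero_le_mult_iff)
  have "K2 * ln (R / K2) - (1 - K2 / R - 2 * \<delta>) * R = - (3 / 4 * poisson_rate R K2)"
    unfolding tR poisson_rate_def by (simp add: field_simps)
  moreover have "K2 * \<tau> * ln (1 / (K2 / R)) - (1 - K2 / R - 2 * \<delta>) * \<tau> * R
      = \<tau> * (K2 * ln (R / K2) - (1 - K2 / R - 2 * \<delta>) * R)"
    by (simp add: algebra_simps)
  ultimately show "K2 * \<tau> * ln (1 / (K2 / R)) - (1 - K2 / R - 2 * \<delta>) * \<tau> * R = - (3 / 4 * poisson_rate R K2 * \<tau>)"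
    by simp
qed

lemma lower_symbol_tail_exp_decay:
  fixes K2 R :: real
  assumes K2: "0 < K2" and RK: "K2 < R"
  shows "\<exists>C>0. \<forall>\<tau> lam psi J e. 0 < \<tau> \<and> state_decomp lam psi \<and> in_sector (K2 * \<tau>) lam psi \<and>
       orthonormal_fam J e \<and> real J \<le> \<tau> powr (1/8) \<longrightarrow>
       (\<integral>\<^sup>+ u. indicator {u. l2_normsq (proj J e (vec_of J e u)) > R} u
                * ennreal ((l2_normsq (proj J e (vec_of J e u))) ^ 3)
             \<partial>lower_symbol lam psi J e (1 / \<tau>))
         \<le> ennreal (C * exp (- (poisson_rate R K2 / 4) * \<tau>))"
proof -
  define g where "g = poisson_rate R K2"
  define \<delta> where "\<delta> = g / (8 * R)"
  define C where "C = 6 / \<delta>^3 * (1 + 4 * K2 / g) * exp (ln (1 / \<delta>) + 4 * (ln (1 / \<delta>))^2 / g)"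
  note tilt = poisson_tilt[OF K2 RK, folded g_def, folded \<delta>_def]
  have g: "0 < g" unfolding g_def using poisson_rate_pos[OF K2 RK] .
  have l: "0 < K2 / R" "K2 / R \<le> 1" using K2 RK by simp_all
  have "(\<integral>\<^sup>+ u. indicator {u. l2_normsq (proj J e (vec_of J e u)) > R} u
                * ennreal ((l2_normsq (proj J e (vec_of J e u))) ^ 3) \<partial>lower_symbol lam psi J e (1 / \<tau>))
      \<le> ennreal (C * exp (- (g / 4) * \<tau>))"
    if \<tau>: "0 < \<tau>" and sd: "state_decomp lam psi" and ins: "in_sector (K2 * \<tau>) lam psi"
      and onf: "orthonormal_fam J e" and J: "real J \<le> \<tau> powr (1/8)" for \<tau> lam psi J e
  proof (cases "J = 0")
    case True
    then show ?thesis using K2 RK by (simp add: proj_def l2_normsq_def indicator_def)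
  next
    case False
    then have "1 \<le> (\<tau> powr (1/8)) ^ 8" using J by (simp add: one_le_power)
    then have \<tau>1: "1 \<le> \<tau>" using \<tau> by (simp add: powr_power)
    have "1 - K2 / R = (1 - K2 / R - 2 * \<delta>) + 2 * \<delta>" by simp
    note tail = lower_symbol_tail_moment_le[OF \<tau>1 K2 l tilt(1,3) this sd ins onf, of R, unfolded tilt(4)]
    show ?thesis
      using order_trans[OF tail ennreal_leI[OF tail_prefactor_le[OF K2 g tilt(1,2) \<tau>1 J]]]
      unfolding C_def .
  qed
  moreover have "0 < C" unfolding C_def using tilt(1) K2 g by (simp add: add_pos_nonneg)
  ultimately show ?thesis unfolding g_def by blast
qed

theorem lemma3p7:
  fixes K R :: real
  assumes "K > 0" and "R > K^2"
  shows "\<exists>C c. C > 0 \<and> c > 0 \<and>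
    (\<forall>(\<tau>::real) lam psi (J::nat) e.
       \<tau> > 0 \<and> state_decomp lam psi \<and> in_sector (K^2 * \<tau>) lam psi \<and>
       orthonormal_fam J e \<and> real J \<le> \<tau> powr (1/8) \<longrightarrow>
       (\<integral>\<^sup>+ u. indicator {u. l2_normsq (proj J e (vec_of J e u)) > R} u
                * ennreal ((l2_normsq (proj J e (vec_of J e u))) ^ 3)
             \<partial>lower_symbol lam psi J e (1 / \<tau>))
         \<le> ennreal (C * exp (- c * \<tau>)))"
proof -
  have K2: "0 < K^2" using assms(1) by simp
  have "0 < poisson_rate R (K^2) / 4" using poisson_rate_pos[OF K2 assms(2)] by simp
  with lower_symbol_tail_exp_decay[OF K2 assms(2)] show ?thesis by blast
qed

end
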